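(* Let $F$ be a graph on vertex set $[k]$. Let $(W_n)_n$ be a sequence of graphons $W_n:\Omega^2\to[0,1]$ converging to a graphon $W$ in the cut-norm, and for each $n$ let $\mathfrak{c}_n$ be a fractional $F$-cover of $W_n$. Then every weak$^*$ accumulation point $\mathfrak{c}$ of $(\mathfrak{c}_n)_n$ is a fractional $F$-cover of $W$.
   Context: $(\Omega,\nu)$ is an atomless Borel probability space; a graphon is a symmetric measurable $W:\Omega^2\to[0,1]$. The cut-norm is $\|V\|_\square=\sup_{A,B\subset\Omega}|\int_{A\times B}V|$. Weak$^*$ convergence is in $\mathcal{L}^\infty(\Omega)$ viewed as the dual of $\mathcal{L}^1(\Omega)$: $f_n\to f$ weak$^*$ iff $\int f_ng\to\int fg$ for every $g\in\mathcal{L}^1(\Omega)$. For a graphon $W$, $W^{\otimes F}(x_1,\dots,x_k)=\prod_{ij\in E(F),i<j}W(x_i,x_j)$ and $\mathcal{F}_F(W)=\{W^{\otimes F}\neq0\}$. A fractional $F$-cover of $W$ is a measurable $\mathfrak{c}:\Omega\to[0,1]$ with $\nu^k\big(\mathcal{F}_F(W)\cap\{(x_1,\dots,x_k):\sum_{i=1}^k\mathfrak{c}(x_i)<1\}\big)=0$. *)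

theory Defs
  imports "HOL-Probability.Probability"
begin

definition atomless :: "'a measure \<Rightarrow> bool" where
  "atomless M \<longleftrightarrow> (\<forall>A\<in>sets M. 0 < measure M A \<longrightarrow>
     (\<exists>B\<in>sets M. B \<subseteq> A \<and> 0 < measure M B \<and> measure M B < measure M A))"

definition graphon :: "'a measure \<Rightarrow> ('a \<Rightarrow> 'a \<Rightarrow> real) \<Rightarrow> bool" where
  "graphon M W \<longleftrightarrow> (\<lambda>(x,y). W x y) \<in> borel_measurable (M \<Otimes>\<^sub>M M)
     \<and> (\<forall>x\<in>space M. \<forall>y\<in>space M. W x y = W y x)
     \<and> (\<forall>x\<in>space M. \<forall>y\<in>space M. 0 \<le> W x y \<and> W x y \<le> 1)"

definition cut_norm :: "'a measure \<Rightarrow> ('a \<Rightarrow> 'a \<Rightarrow> real) \<Rightarrow> real" where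
  "cut_norm M V = (SUP AB \<in> sets M \<times> sets M.
     \<bar>LINT z|(M \<Otimes>\<^sub>M M). indicator (fst AB \<times> snd AB) z * V (fst z) (snd z)\<bar>)"

definition graph_on :: "nat \<Rightarrow> (nat \<times> nat) set \<Rightarrow> bool" where
  "graph_on k E \<longleftrightarrow> (\<forall>(i,j)\<in>E. i < j \<and> j < k)"

definition hom_density_fun :: "(nat \<times> nat) set \<Rightarrow> ('a \<Rightarrow> 'a \<Rightarrow> real) \<Rightarrow> (nat \<Rightarrow> 'a) \<Rightarrow> real" where
  "hom_density_fun E W x = (\<Prod>(i,j)\<in>E. W (x i) (x j))"

definition frac_cover ::
  "'a measure \<Rightarrow> nat \<Rightarrow> (nat \<times> nat) set \<Rightarrow> ('a \<Rightarrow> 'a \<Rightarrow> real) \<Rightarrow> ('a \<Rightarrow> real) \<Rightarrow> bool" where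
  "frac_cover M k E W c \<longleftrightarrow> c \<in> borel_measurable M
     \<and> (\<forall>x\<in>space M. 0 \<le> c x \<and> c x \<le> 1)
     \<and> emeasure (PiM {..<k} (\<lambda>_. M))
         {x \<in> space (PiM {..<k} (\<lambda>_. M)). hom_density_fun E W x \<noteq> 0 \<and> (\<Sum>i<k. c (x i)) < 1} = 0"

text \<open>c is a weak* accumulation (cluster) point of the sequence cs in L^infinity = (L^1)^*:
  every basic weak* neighbourhood of c (given by finitely many L^1 functions and eps > 0)
  contains cs n for infinitely many n.\<close>
definition weak_star_acc_point :: "'a measure \<Rightarrow> (nat \<Rightarrow> 'a \<Rightarrow> real) \<Rightarrow> ('a \<Rightarrow> real) \<Rightarrow> bool" where
  "weak_star_acc_point M cs c \<longleftrightarrow>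
     (\<forall>G e N. finite G \<and> (\<forall>g\<in>G. integrable M g) \<and> 0 < e \<longrightarrow>
        (\<exists>n\<ge>N. \<forall>g\<in>G. \<bar>(LINT x|M. cs n x * g x) - (LINT x|M. c x * g x)\<bar> < e))"

end

theory Submission
  imports Defs
begin

text \<open>
  Fix a box \<open>X = X\<^sub>0 \<times> \<dots> \<times> X\<^sub>k\<^sub>-\<^sub>1\<close>. Since \<open>c\<^sub>n\<close> covers \<open>W\<^sub>n\<close>, the integral of
  \<open>W\<^sub>n\<^sup>\<otimes>\<^sup>F \<cdot> 1\<^sub>X \<cdot> (\<Sum>\<^sub>i c\<^sub>n(x\<^sub>i) - 1)\<close> is nonnegative. By the counting lemma, replacing
  \<open>W\<^sub>n\<^sup>\<otimes>\<^sup>F\<close> by \<open>W\<^sup>\<otimes>\<^sup>F\<close> costs at most \<open>|E(F)| \<parallel>W\<^sub>n - W\<parallel>\<^sub>\<box>\<close> per term, and after integrating out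
  all coordinates but \<open>x\<^sub>i\<close> the term with \<open>c\<^sub>n(x\<^sub>i)\<close> becomes \<open>\<integral> c\<^sub>n h\<^sub>i\<close> for an \<open>h\<^sub>i \<in> L\<^sup>1\<close>,
  which is close to \<open>\<integral> c h\<^sub>i\<close> for infinitely many \<open>n\<close>. Hence the box integrals of
  \<open>W\<^sup>\<otimes>\<^sup>F \<cdot> (\<Sum>\<^sub>i c(x\<^sub>i) - 1)\<close> are nonnegative, and as boxes generate the product
  \<sigma>-algebra this function is nonnegative almost everywhere, which is the cover property.
  The accumulation point is first clipped to \<open>[0,1]\<close>, which changes it only on a null set.
\<close>

lemma PiE_lessThan_diff:
  fixes k :: nat
  shows "PiE {..<k} X - PiE {..<k} Y =
     (\<Union>j<k. PiE {..<k} (\<lambda>i. if i < j then X i \<inter> Y i else if i = j then X i - Y i else X i))"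
  (is "_ = (\<Union>j<k. PiE {..<k} (?D j))")
proof
  show "PiE {..<k} X - PiE {..<k} Y \<subseteq> (\<Union>j<k. PiE {..<k} (?D j))"
  proof
    fix x assume x: "x \<in> PiE {..<k} X - PiE {..<k} Y"
    then have ex: "\<exists>i<k. x i \<notin> Y i"
      by (auto simp: PiE_iff)
    define j where "j = (LEAST i. i < k \<and> x i \<notin> Y i)"
    have j: "j < k" "x j \<notin> Y j"
      using LeastI_ex[of "\<lambda>i. i < k \<and> x i \<notin> Y i"] ex unfolding j_def by auto
    have "x i \<in> Y i" if "i < j" for i
      using not_less_Least[of i "\<lambda>i. i < k \<and> x i \<notin> Y i"] that j unfolding j_def by auto
    with x j have "x \<in> PiE {..<k} (?D j)"
      by (auto simp: PiE_iff)
    with j show "x \<in> (\<Union>j<k. PiE {..<k} (?D j))" by auto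
  qed
  show "(\<Union>j<k. PiE {..<k} (?D j)) \<subseteq> PiE {..<k} X - PiE {..<k} Y"
  proof
    fix x assume "x \<in> (\<Union>j<k. PiE {..<k} (?D j))"
    then obtain j where j: "j < k" "x \<in> PiE {..<k} (?D j)" by auto
    then have "x j \<notin> Y j"
      using PiE_mem[OF j(2), of j] by auto
    with j show "x \<in> PiE {..<k} X - PiE {..<k} Y"
      by (auto simp: PiE_iff split: if_splits)
  qed
qed

lemma disjoint_family_on_PiE_lessThan_diff:
  fixes k :: nat and X Y :: "nat \<Rightarrow> 'a set"
  defines "D j \<equiv> PiE {..<k} (\<lambda>i. if i < j then X i \<inter> Y i else if i = j then X i - Y i else X i)"
  shows "disjoint_family_on D {..<k}"
proof -
  have "D j \<inter> D j' = {}" if "j < j'" "j' < k" for j j'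
  proof (rule equals0I)
    fix x assume "x \<in> D j \<inter> D j'"
    then have "x j \<in> X j - Y j" "x j \<in> X j \<inter> Y j"
      using that unfolding D_def by (auto dest!: PiE_mem[where x=j])
    then show False by simp
  qed
  then show ?thesis
    unfolding disjoint_family_on_def by (metis Int_commute lessThan_iff linorder_neqE_nat)
qed

lemma semiring_of_sets_PiE:
  fixes k :: nat
  assumes "0 < k"
  shows "semiring_of_sets (PiE {..<k} (\<lambda>_. space M)) {PiE {..<k} X | X. X \<in> (\<Pi> j\<in>{..<k}. sets M)}"
    (is "semiring_of_sets ?\<Omega> ?G")
proof
  show "?G \<subseteq> Pow ?\<Omega>"
  proof
    fix A assume "A \<in> ?G"
    then obtain X where "X \<in> (\<Pi> j\<in>{..<k}. sets M)" "A = PiE {..<k} X" by blast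
    then show "A \<in> Pow ?\<Omega>"
      using sets.sets_into_space by (auto intro!: PiE_mono)
  qed
  show "{} \<in> ?G"
    using assms by (intro CollectI exI[of _ "\<lambda>_. {}"]) auto
  fix a b assume "a \<in> ?G" "b \<in> ?G"
  then obtain X Y where X: "X \<in> (\<Pi> j\<in>{..<k}. sets M)" "a = PiE {..<k} X"
    and Y: "Y \<in> (\<Pi> j\<in>{..<k}. sets M)" "b = PiE {..<k} Y" by blast
  show "a \<inter> b \<in> ?G"
    using X Y by (intro CollectI exI[of _ "\<lambda>i. X i \<inter> Y i"]) (auto simp: PiE_Int)
  define D where "D j = (\<lambda>i. if i < j then X i \<inter> Y i else if i = j then X i - Y i else X i)" for j
  have "PiE {..<k} (D j) \<in> ?G" for j
  proof -
    have "D j \<in> (\<Pi> j\<in>{..<k}. sets M)"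
      using X(1) Y(1) unfolding D_def by (auto simp: Pi_iff)
    then show ?thesis by blast
  qed
  then have "(\<lambda>j. PiE {..<k} (D j)) ` {..<k} \<subseteq> ?G" by blast
  moreover have "disjoint ((\<lambda>j. PiE {..<k} (D j)) ` {..<k})"
    unfolding D_def by (intro disjoint_family_on_disjoint_image disjoint_family_on_PiE_lessThan_diff)
  moreover have "a - b = \<Union>((\<lambda>j. PiE {..<k} (D j)) ` {..<k})"
    unfolding X Y D_def by (rule PiE_lessThan_diff)
  ultimately show "\<exists>C\<subseteq>?G. finite C \<and> disjoint C \<and> a - b = \<Union>C"
    by blast
qed

lemma emeasure_le_from_generator:
  fixes \<mu>1 \<mu>2 :: "'b measure"
  assumes semi: "semiring_of_sets \<Omega> G" and \<Omega>G: "\<Omega> \<in> G"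
    and sets1: "sets \<mu>1 = sigma_sets \<Omega> G" and sets2: "sets \<mu>2 = sigma_sets \<Omega> G"
    and fin1: "finite_measure \<mu>1" and fin2: "finite_measure \<mu>2"
    and le: "\<And>R. R \<in> G \<Longrightarrow> emeasure \<mu>2 R \<le> emeasure \<mu>1 R"
    and A: "A \<in> sigma_sets \<Omega> G"
  shows "emeasure \<mu>2 A \<le> emeasure \<mu>1 A"
proof -
  interpret semiring_of_sets \<Omega> G by fact
  have G_sets: "G \<subseteq> sigma_sets \<Omega> G" by auto
  define \<nu> where "\<nu> R = emeasure \<mu>1 R - emeasure \<mu>2 R" for R
  have \<nu>_add: "\<nu> R + emeasure \<mu>2 R = emeasure \<mu>1 R" if "R \<in> G" for R
    unfolding \<nu>_def using le[OF that] by (rule diff_add_cancel_ennreal)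
  have "countably_additive G \<nu>"
    unfolding countably_additive_def
  proof (intro allI impI)
    fix F :: "nat \<Rightarrow> 'b set"
    assume F: "range F \<subseteq> G" "disjoint_family F" "(\<Union>i. F i) \<in> G"
    have "range F \<subseteq> sets \<mu>1" "range F \<subseteq> sets \<mu>2"
      using F(1) G_sets sets1 sets2 by auto
    then have sum1: "(\<Sum>i. emeasure \<mu>1 (F i)) = emeasure \<mu>1 (\<Union>i. F i)"
      and sum2: "(\<Sum>i. emeasure \<mu>2 (F i)) = emeasure \<mu>2 (\<Union>i. F i)"
      using F(2) by (auto intro: suminf_emeasure)
    have "(\<Sum>i. \<nu> (F i)) + emeasure \<mu>2 (\<Union>i. F i) = (\<Sum>i. \<nu> (F i) + emeasure \<mu>2 (F i))"
      unfolding sum2[symmetric] by (rule suminf_add) (auto intro: summableI)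
    also have "\<dots> = (\<Sum>i. emeasure \<mu>1 (F i))"
      using F(1) \<nu>_add by (intro suminf_cong) auto
    also have "\<dots> = emeasure \<mu>1 (\<Union>i. F i)"
      by (rule sum1)
    also have "\<dots> = \<nu> (\<Union>i. F i) + emeasure \<mu>2 (\<Union>i. F i)"
      using \<nu>_add[OF F(3)] by simp
    finally show "(\<Sum>i. \<nu> (F i)) = \<nu> (\<Union>i. F i)"
      using fin2 by (simp add: finite_measure.emeasure_finite)
  qed
  moreover have "positive G \<nu>"
    unfolding positive_def \<nu>_def by simp
  ultimately obtain \<mu>' where \<mu>'_G: "\<And>R. R \<in> G \<Longrightarrow> \<mu>' R = \<nu> R"
    and \<mu>': "measure_space \<Omega> (sigma_sets \<Omega> G) \<mu>'"
    using caratheodory by blast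
  \<comment> \<open>Uniqueness of extensions identifies \<open>\<mu>1\<close> with the measure \<open>\<mu>' + \<mu>2\<close>.\<close>
  define N where "N = measure_of \<Omega> (sigma_sets \<Omega> G) (\<lambda>A. \<mu>' A + emeasure \<mu>2 A)"
  have sigma: "sigma_algebra \<Omega> (sigma_sets \<Omega> G)"
    using space_closed by (rule sigma_algebra_sigma_sets)
  have "countably_additive (sigma_sets \<Omega> G) (\<lambda>A. \<mu>' A + emeasure \<mu>2 A)"
    unfolding countably_additive_def
  proof (intro allI impI)
    fix F :: "nat \<Rightarrow> 'b set"
    assume F: "range F \<subseteq> sigma_sets \<Omega> G" "disjoint_family F" "(\<Union>i. F i) \<in> sigma_sets \<Omega> G"
    have "(\<Sum>i. \<mu>' (F i)) = \<mu>' (\<Union>i. F i)"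
      using \<mu>' F unfolding measure_space_def countably_additive_def by blast
    moreover have "(\<Sum>i. emeasure \<mu>2 (F i)) = emeasure \<mu>2 (\<Union>i. F i)"
      using F sets2 by (intro suminf_emeasure) auto
    ultimately show "(\<Sum>i. \<mu>' (F i) + emeasure \<mu>2 (F i)) = \<mu>' (\<Union>i. F i) + emeasure \<mu>2 (\<Union>i. F i)"
      by (subst suminf_add[symmetric]) (auto intro: summableI)
  qed
  moreover have "positive (sigma_sets \<Omega> G) (\<lambda>A. \<mu>' A + emeasure \<mu>2 A)"
    using \<mu>' unfolding measure_space_def positive_def by simp
  ultimately have emeasure_N: "emeasure N B = \<mu>' B + emeasure \<mu>2 B" if "B \<in> sigma_sets \<Omega> G" for B
    unfolding N_def using sigma that by (intro emeasure_measure_of_sigma)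
  have "\<mu>1 = N"
  proof (rule measure_eqI_generator_eq[where E=G and \<Omega>=\<Omega> and A="\<lambda>_. \<Omega>"])
    show "Int_stable G" unfolding Int_stable_def by auto
    show "G \<subseteq> Pow \<Omega>" by (rule space_closed)
    show "emeasure \<mu>1 X = emeasure N X" if "X \<in> G" for X
      using that emeasure_N[of X] G_sets \<mu>'_G[of X] \<nu>_add[of X] by auto
    show "sets \<mu>1 = sigma_sets \<Omega> G" by fact
    show "sets N = sigma_sets \<Omega> G"
      unfolding N_def using sigma by (rule sigma_algebra.sets_measure_of_eq)
    show "range (\<lambda>_. \<Omega>) \<subseteq> G" "(\<Union>i::nat. \<Omega>) = \<Omega>" using \<Omega>G by auto
    show "emeasure \<mu>1 \<Omega> \<noteq> \<infinity>" for i :: nat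
      using fin1 by (simp add: finite_measure.emeasure_finite)
  qed
  then show ?thesis
    using emeasure_N[OF A] by (simp add: le_iff_add add.commute)
qed

lemma AE_nonneg_from_generator:
  fixes f :: "'b \<Rightarrow> real"
  assumes semi: "semiring_of_sets \<Omega> G" and \<Omega>G: "\<Omega> \<in> G" and sets_N: "sets N = sigma_sets \<Omega> G"
    and f: "integrable N f"
    and nonneg: "\<And>R. R \<in> G \<Longrightarrow> 0 \<le> (\<integral>x. f x * indicator R x \<partial>N)"
  shows "AE x in N. 0 \<le> f x"
proof -
  note [measurable] = borel_measurable_integrable[OF f]
  define \<mu>p where "\<mu>p = density N (\<lambda>x. ennreal (f x))"
  define \<mu>m where "\<mu>m = density N (\<lambda>x. ennreal (- f x))"
  have emeasure_\<mu>p: "emeasure \<mu>p A = (\<integral>\<^sup>+x. ennreal (f x * indicator A x) \<partial>N)"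
    and emeasure_\<mu>m: "emeasure \<mu>m A = (\<integral>\<^sup>+x. ennreal (- (f x * indicator A x)) \<partial>N)"
    if "A \<in> sets N" for A
    unfolding \<mu>p_def \<mu>m_def using that
    by (auto simp: emeasure_density intro!: nn_integral_cong split: split_indicator)
  have fin_p: "emeasure \<mu>p A \<noteq> \<infinity>" and fin_m: "emeasure \<mu>m A \<noteq> \<infinity>" if "A \<in> sets N" for A
    using integrableD(2,3)[OF integrable_real_mult_indicator[OF that f]] that
    by (simp_all add: emeasure_\<mu>p emeasure_\<mu>m)
  have "finite_measure \<mu>p" "finite_measure \<mu>m"
    using fin_p[OF sets.top] fin_m[OF sets.top] by (auto intro!: finite_measureI simp: \<mu>p_def \<mu>m_def)
  moreover have "emeasure \<mu>m R \<le> emeasure \<mu>p R" if R: "R \<in> G" for R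
  proof -
    have R_sets: "R \<in> sets N" using R sets_N by auto
    have "enn2real (emeasure \<mu>m R) \<le> enn2real (emeasure \<mu>p R)"
      using nonneg[OF R] real_lebesgue_integral_def[OF integrable_real_mult_indicator[OF R_sets f]]
      unfolding emeasure_\<mu>p[OF R_sets] emeasure_\<mu>m[OF R_sets] by linarith
    then have "emeasure \<mu>m R \<le> ennreal (enn2real (emeasure \<mu>p R))"
      using fin_m[OF R_sets] by (intro enn2real_le) auto
    then show ?thesis
      using fin_p[OF R_sets] by (simp add: ennreal_enn2real_if)
  qed
  moreover define S where "S = {x \<in> space N. f x < 0}"
  moreover have S: "S \<in> sets N" unfolding S_def by measurable
  ultimately have "emeasure \<mu>m S \<le> emeasure \<mu>p S"
    using emeasure_le_from_generator[OF semi \<Omega>G] sets_N by (simp add: \<mu>p_def \<mu>m_def)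
  also have "emeasure \<mu>p S = 0"
    unfolding emeasure_\<mu>p[OF S] by (auto simp: S_def ennreal_neg indicator_def intro!: nn_integral_zero')
  finally have "(\<integral>\<^sup>+x. ennreal (- (f x * indicator S x)) \<partial>N) = 0"
    using emeasure_\<mu>m[OF S] by simp
  moreover have "(\<lambda>x. ennreal (- (f x * indicator S x))) \<in> borel_measurable N"
    using S by measurable
  ultimately have "AE x in N. ennreal (- (f x * indicator S x)) = 0"
    by (simp add: nn_integral_0_iff_AE)
  with AE_space show ?thesis
    by eventually_elim (auto simp: S_def indicator_def split: if_splits)
qed

lemma (in finite_measure) integrable_bounded_on_space:
  fixes f :: "'a \<Rightarrow> real"
  assumes "f \<in> borel_measurable M" "\<And>x. x \<in> space M \<Longrightarrow> \<bar>f x\<bar> \<le> B"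
  shows "integrable M f"
  using assms by (intro integrable_const_bound[where B=B]) (auto intro!: AE_I2)

lemma (in prob_space) abs_integral_le_bound:
  fixes f :: "'a \<Rightarrow> real"
  assumes "f \<in> borel_measurable M" "\<And>x. x \<in> space M \<Longrightarrow> \<bar>f x\<bar> \<le> B"
  shows "\<bar>\<integral>x. f x \<partial>M\<bar> \<le> B"
proof -
  have "integrable M f"
    using assms by (rule integrable_bounded_on_space)
  then have "(\<integral>x. \<bar>f x\<bar> \<partial>M) \<le> B"
    using assms(2) by (intro integral_le_const) (auto intro!: AE_I2)
  then show ?thesis
    using integral_abs_bound[of M f] by linarith
qed

text \<open>The witness is the set where \<open>g\<close> has the sign of \<open>\<integral> \<alpha> g\<close>.\<close>

lemma (in finite_measure) exists_indicator_integral_ge: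
  fixes g \<alpha> :: "'a \<Rightarrow> real"
  assumes g: "integrable M g"
    and \<alpha>: "\<alpha> \<in> borel_measurable M" "\<And>x. x \<in> space M \<Longrightarrow> 0 \<le> \<alpha> x \<and> \<alpha> x \<le> 1"
  shows "\<exists>A\<in>sets M. \<bar>\<integral>x. \<alpha> x * g x \<partial>M\<bar> \<le> \<bar>\<integral>x. indicator A x * g x \<partial>M\<bar>"
proof -
  have int_\<alpha>: "integrable M (\<lambda>x. \<alpha> x * g x)"
    using \<alpha> g by (intro Bochner_Integration.integrable_bound[OF g])
      (auto intro!: AE_I2 simp: abs_mult mult_left_le_one_le)
  have int_A: "integrable M (\<lambda>x. indicator A x * g x)" if "A \<in> sets M" for A
    using integrable_real_mult_indicator[OF that g] by (simp add: mult.commute)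
  show ?thesis
  proof (cases "0 \<le> (\<integral>x. \<alpha> x * g x \<partial>M)")
    case True
    define A where "A = {x\<in>space M. 0 < g x}"
    have A: "A \<in> sets M" unfolding A_def using g by measurable
    have "(\<integral>x. \<alpha> x * g x \<partial>M) \<le> (\<integral>x. indicator A x * g x \<partial>M)"
      using \<alpha>(2) by (intro integral_mono[OF int_\<alpha> int_A[OF A]])
        (auto simp: A_def indicator_def mult_left_le_one_le mult_nonneg_nonpos)
    then show ?thesis using True A by (intro bexI[of _ A]) auto
  next
    case False
    define A where "A = {x\<in>space M. g x < 0}"
    have A: "A \<in> sets M" unfolding A_def using g by measurable
    have "(\<integral>x. indicator A x * g x \<partial>M) \<le> (\<integral>x. \<alpha> x * g x \<partial>M)"
    proof (intro integral_mono[OF int_A[OF A] int_\<alpha>])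
      fix x assume x: "x \<in> space M"
      show "indicator A x * g x \<le> \<alpha> x * g x"
      proof (cases "g x < 0")
        case True
        then have "1 * g x \<le> \<alpha> x * g x" using \<alpha>(2)[OF x] by (intro mult_right_mono_neg) auto
        then show ?thesis using x True by (simp add: A_def)
      qed (use x \<alpha>(2)[OF x] in \<open>simp add: A_def\<close>)
    qed
    then show ?thesis using False A by (intro bexI[of _ A]) auto
  qed
qed

lemma (in prob_space) abs_integral_le_cut_norm:
  fixes V :: "'a \<Rightarrow> 'a \<Rightarrow> real" and \<alpha> \<beta> :: "'a \<Rightarrow> real"
  assumes V: "(\<lambda>(x,y). V x y) \<in> borel_measurable (M \<Otimes>\<^sub>M M)"
    and V_bound: "\<And>x y. x \<in> space M \<Longrightarrow> y \<in> space M \<Longrightarrow> \<bar>V x y\<bar> \<le> 1"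
    and \<alpha>: "\<alpha> \<in> borel_measurable M" "\<And>x. x \<in> space M \<Longrightarrow> 0 \<le> \<alpha> x \<and> \<alpha> x \<le> 1"
    and \<beta>: "\<beta> \<in> borel_measurable M" "\<And>x. x \<in> space M \<Longrightarrow> 0 \<le> \<beta> x \<and> \<beta> x \<le> 1"
  shows "\<bar>\<integral>z. V (fst z) (snd z) * \<alpha> (fst z) * \<beta> (snd z) \<partial>(M \<Otimes>\<^sub>M M)\<bar> \<le> cut_norm M V"
proof -
  interpret P: pair_prob_space M M ..
  note [measurable] = V \<alpha>(1) \<beta>(1)
  have int_weighted: "integrable (M \<Otimes>\<^sub>M M) (\<lambda>(x,y). V x y * a x * b y)"
    if [measurable]: "a \<in> borel_measurable M" "b \<in> borel_measurable M"
      and "\<And>x. x \<in> space M \<Longrightarrow> \<bar>a x\<bar> \<le> 1" "\<And>x. x \<in> space M \<Longrightarrow> \<bar>b x\<bar> \<le> 1" for a b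
    using V_bound that(3,4)
    by (intro P.integrable_bounded_on_space[where B=1])
      (auto simp: space_pair_measure abs_mult intro!: mult_le_one)
  have \<alpha>\<beta>_abs: "\<And>x. x \<in> space M \<Longrightarrow> \<bar>\<alpha> x\<bar> \<le> 1" "\<And>x. x \<in> space M \<Longrightarrow> \<bar>\<beta> x\<bar> \<le> 1"
    using \<alpha>(2) \<beta>(2) by auto
  \<comment> \<open>Replace first \<open>\<beta>\<close>, then \<open>\<alpha>\<close>, by an indicator, integrating out the other variable.\<close>
  define h where "h y = (\<integral>x. V x y * \<alpha> x \<partial>M)" for y
  have h: "integrable M h"
    using P.integrable_snd[OF int_weighted[of \<alpha> "\<lambda>_. 1"]] \<alpha>\<beta>_abs unfolding h_def by simp
  have eq1: "(\<integral>z. V (fst z) (snd z) * \<alpha> (fst z) * \<beta> (snd z) \<partial>(M \<Otimes>\<^sub>M M)) = (\<integral>y. \<beta> y * h y \<partial>M)"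
    using P.integral_snd[OF int_weighted[OF \<alpha>(1) \<beta>(1) \<alpha>\<beta>_abs]]
    by (simp add: case_prod_beta' h_def mult.commute)
  obtain B where B[measurable]: "B \<in> sets M"
    and le1: "\<bar>\<integral>y. \<beta> y * h y \<partial>M\<bar> \<le> \<bar>\<integral>y. indicator B y * h y \<partial>M\<bar>"
    using exists_indicator_integral_ge[OF h \<beta>] by blast
  define g where "g x = (\<integral>y. V x y * indicator B y \<partial>M)" for x
  have g: "integrable M g"
    using P.integrable_fst[OF int_weighted[of "\<lambda>_. 1" "indicator B"]] unfolding g_def
    by (simp add: indicator_def)
  have "(\<integral>y. indicator B y * h y \<partial>M) = (\<integral>y. (\<integral>x. V x y * \<alpha> x * indicator B y \<partial>M) \<partial>M)"
    unfolding h_def by (simp add: mult.commute)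
  also have "\<dots> = (\<integral>x. (\<integral>y. V x y * \<alpha> x * indicator B y \<partial>M) \<partial>M)"
    using P.Fubini_integral[OF int_weighted[of \<alpha> "indicator B"]] \<alpha>\<beta>_abs(1)
    by (simp add: case_prod_beta' indicator_def)
  finally have eq2: "(\<integral>y. indicator B y * h y \<partial>M) = (\<integral>x. \<alpha> x * g x \<partial>M)"
    unfolding g_def by (simp add: ac_simps)
  obtain A where A[measurable]: "A \<in> sets M"
    and le2: "\<bar>\<integral>x. \<alpha> x * g x \<partial>M\<bar> \<le> \<bar>\<integral>x. indicator A x * g x \<partial>M\<bar>"
    using exists_indicator_integral_ge[OF g \<alpha>] by blast
  have int_AB: "integrable (M \<Otimes>\<^sub>M M) (\<lambda>z. indicator (A \<times> B) z * V (fst z) (snd z))"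
    using V_bound by (intro P.integrable_bounded_on_space[where B=1])
      (auto simp: space_pair_measure indicator_def)
  have "(\<integral>x. indicator A x * g x \<partial>M)
      = (\<integral>x. (\<integral>y. indicator (A \<times> B) (x, y) * V (fst (x,y)) (snd (x,y)) \<partial>M) \<partial>M)"
    unfolding g_def by (intro Bochner_Integration.integral_cong) (auto simp: indicator_def mult.commute)
  also have "\<dots> = (\<integral>z. indicator (A \<times> B) z * V (fst z) (snd z) \<partial>(M \<Otimes>\<^sub>M M))"
    by (rule P.integral_fst'[OF int_AB])
  finally have eq3: "(\<integral>x. indicator A x * g x \<partial>M)
      = (\<integral>z. indicator (A \<times> B) z * V (fst z) (snd z) \<partial>(M \<Otimes>\<^sub>M M))" .
  have "bdd_above ((\<lambda>AB. \<bar>LINT z|(M \<Otimes>\<^sub>M M). indicator (fst AB \<times> snd AB) z * V (fst z) (snd z)\<bar>)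
      ` (sets M \<times> sets M))"
  proof (rule bdd_aboveI2)
    fix AB assume AB: "AB \<in> sets M \<times> sets M"
    then have [measurable]: "fst AB \<in> sets M" "snd AB \<in> sets M" by auto
    show "\<bar>LINT z|(M \<Otimes>\<^sub>M M). indicator (fst AB \<times> snd AB) z * V (fst z) (snd z)\<bar> \<le> 1"
      using V_bound by (intro P.abs_integral_le_bound) (auto simp: space_pair_measure indicator_def)
  qed
  then have "\<bar>\<integral>z. indicator (A \<times> B) z * V (fst z) (snd z) \<partial>(M \<Otimes>\<^sub>M M)\<bar> \<le> cut_norm M V"
    unfolding cut_norm_def using A B by (intro cSUP_upper2[where x="(A, B)"]) auto
  then show ?thesis
    using eq1 le1 eq2 le2 eq3 by linarith
qed

lemma borel_measurable_PiM_component: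
  fixes f :: "'a \<Rightarrow> real"
  assumes "f \<in> borel_measurable M" "i \<in> I"
  shows "(\<lambda>x. f (x i)) \<in> borel_measurable (PiM I (\<lambda>_. M))"
  using measurable_compose[OF measurable_component_singleton[of i I "\<lambda>_. M", OF assms(2)] assms(1)] .

lemma borel_measurable_PiM_pair:
  fixes V :: "'a \<Rightarrow> 'a \<Rightarrow> real"
  assumes "(\<lambda>(s,t). V s t) \<in> borel_measurable (M \<Otimes>\<^sub>M M)" "i \<in> I" "j \<in> I"
  shows "(\<lambda>x. V (x i) (x j)) \<in> borel_measurable (PiM I (\<lambda>_. M))"
  using measurable_Pair_compose_split[OF assms(1)
      measurable_component_singleton[of i I "\<lambda>_. M", OF assms(2)]
      measurable_component_singleton[of j I "\<lambda>_. M", OF assms(3)]] .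

lemma borel_measurable_edge_prod:
  fixes k :: nat and Z :: "nat \<times> nat \<Rightarrow> 'a \<Rightarrow> 'a \<Rightarrow> real"
  assumes "D \<subseteq> {(i,j). i < j \<and> j < k}"
    and "\<And>e. e \<in> D \<Longrightarrow> (\<lambda>(s,t). Z e s t) \<in> borel_measurable (M \<Otimes>\<^sub>M M)"
  shows "(\<lambda>x. \<Prod>e\<in>D. Z e (x (fst e)) (x (snd e))) \<in> borel_measurable (PiM {..<k} (\<lambda>_. M))"
proof (rule borel_measurable_prod)
  fix e assume "e \<in> D"
  with assms show "(\<lambda>x. Z e (x (fst e)) (x (snd e))) \<in> borel_measurable (PiM {..<k} (\<lambda>_. M))"
    by (intro borel_measurable_PiM_pair) auto
qed

lemma (in prob_space) integral_PiM_insert_bounded: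
  fixes f :: "('i \<Rightarrow> 'a) \<Rightarrow> real"
  assumes I: "finite I" "a \<notin> I"
    and f: "f \<in> borel_measurable (PiM (insert a I) (\<lambda>_. M))"
    and f_bound: "\<And>x. x \<in> space (PiM (insert a I) (\<lambda>_. M)) \<Longrightarrow> \<bar>f x\<bar> \<le> B"
  shows "(\<lambda>x. \<integral>s. f (x(a:=s)) \<partial>M) \<in> borel_measurable (PiM I (\<lambda>_. M))"
    and "\<And>x. x \<in> space (PiM I (\<lambda>_. M)) \<Longrightarrow> \<bar>\<integral>s. f (x(a:=s)) \<partial>M\<bar> \<le> B"
    and "(\<integral>x. f x \<partial>PiM (insert a I) (\<lambda>_. M)) = (\<integral>x. (\<integral>s. f (x(a:=s)) \<partial>M) \<partial>PiM I (\<lambda>_. M))"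
proof -
  interpret product_sigma_finite "\<lambda>_. M"
    unfolding product_sigma_finite_def by (simp add: sigma_finite_measure_axioms)
  interpret P: prob_space "PiM (insert a I) (\<lambda>_. M)"
    by (intro prob_space_PiM prob_space_axioms)
  have "(\<lambda>(x, s). f (x(a := s))) \<in> borel_measurable (PiM I (\<lambda>_. M) \<Otimes>\<^sub>M M)"
    using measurable_compose[OF measurable_add_dim f] by (simp add: case_prod_beta' comp_def)
  then show "(\<lambda>x. \<integral>s. f (x(a:=s)) \<partial>M) \<in> borel_measurable (PiM I (\<lambda>_. M))"
    by (rule borel_measurable_lebesgue_integral)
  show "\<bar>\<integral>s. f (x(a:=s)) \<partial>M\<bar> \<le> B" if x: "x \<in> space (PiM I (\<lambda>_. M))" for x
  proof (rule abs_integral_le_bound)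
    have upd: "(\<lambda>s. x(a := s)) \<in> measurable M (PiM (insert a I) (\<lambda>_. M))"
      using measurable_component_update[OF x I(2)] .
    show "(\<lambda>s. f (x(a := s))) \<in> borel_measurable M"
      using measurable_compose[OF upd f] by (simp add: comp_def)
    show "\<bar>f (x(a := s))\<bar> \<le> B" if "s \<in> space M" for s
      using f_bound measurable_space[OF upd that] by simp
  qed
  have "integrable (PiM (insert a I) (\<lambda>_. M)) f"
    using f f_bound by (rule P.integrable_bounded_on_space)
  then show "(\<integral>x. f x \<partial>PiM (insert a I) (\<lambda>_. M)) = (\<integral>x. (\<integral>s. f (x(a:=s)) \<partial>M) \<partial>PiM I (\<lambda>_. M))"
    by (rule product_integral_insert[OF I])
qed

lemma (in prob_space) integral_PiM_component_factor:
  fixes F :: "('i \<Rightarrow> 'a) \<Rightarrow> real" and c :: "'a \<Rightarrow> real"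
  assumes I: "finite I" "i \<in> I"
    and F: "F \<in> borel_measurable (PiM I (\<lambda>_. M))" "\<And>x. x \<in> space (PiM I (\<lambda>_. M)) \<Longrightarrow> \<bar>F x\<bar> \<le> 1"
    and c: "c \<in> borel_measurable M" "\<And>y. y \<in> space M \<Longrightarrow> \<bar>c y\<bar> \<le> 1"
  defines "h y \<equiv> \<integral>x. F (x(i:=y)) \<partial>PiM (I - {i}) (\<lambda>_. M)"
  shows "integrable M h"
    and "(\<integral>x. F x * c (x i) \<partial>PiM I (\<lambda>_. M)) = (\<integral>y. c y * h y \<partial>M)"
proof -
  let ?J = "I - {i}"
  have I_eq: "insert i ?J = I" using I(2) by auto
  interpret PJ: prob_space "PiM ?J (\<lambda>_. M)"
    by (intro prob_space_PiM prob_space_axioms)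
  interpret PP: pair_prob_space "PiM ?J (\<lambda>_. M)" M ..
  have upd: "(\<lambda>(x, y). x(i := y)) \<in> measurable (PiM ?J (\<lambda>_. M) \<Otimes>\<^sub>M M) (PiM I (\<lambda>_. M))"
    using measurable_add_dim[of i ?J "\<lambda>_. M"] unfolding I_eq .
  have int_pair: "integrable (PiM ?J (\<lambda>_. M) \<Otimes>\<^sub>M M) (\<lambda>(x,y). F (x(i:=y)) * d y)"
    if "d \<in> borel_measurable M" "\<And>y. y \<in> space M \<Longrightarrow> \<bar>d y\<bar> \<le> 1" for d
  proof (rule PP.integrable_bounded_on_space[where B=1])
    show "(\<lambda>(x,y). F (x(i:=y)) * d y) \<in> borel_measurable (PiM ?J (\<lambda>_. M) \<Otimes>\<^sub>M M)"
      using measurable_compose[OF upd F(1)] that(1) by (simp add: case_prod_beta' comp_def)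
    show "\<bar>case z of (x, y) \<Rightarrow> F (x(i:=y)) * d y\<bar> \<le> 1" if "z \<in> space (PiM ?J (\<lambda>_. M) \<Otimes>\<^sub>M M)" for z
      using F(2)[OF measurable_space[OF upd \<open>z \<in> _\<close>]] that \<open>\<And>y. y \<in> space M \<Longrightarrow> \<bar>d y\<bar> \<le> 1\<close>
      by (auto simp: case_prod_beta' abs_mult space_pair_measure intro: mult_le_one)
  qed
  show "integrable M h"
    using PP.integrable_snd[OF int_pair[of "\<lambda>_. 1"]] unfolding h_def by simp
  have "(\<integral>x. F x * c (x i) \<partial>PiM (insert i ?J) (\<lambda>_. M))
      = (\<integral>x. (\<integral>y. F (x(i:=y)) * c ((x(i:=y)) i) \<partial>M) \<partial>PiM ?J (\<lambda>_. M))"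
    using I F c
    by (intro integral_PiM_insert_bounded(3)[where B=1])
      (auto simp: insert_absorb[OF I(2)] space_PiM PiE_iff borel_measurable_PiM_component abs_mult
        intro!: mult_le_one)
  then have "(\<integral>x. F x * c (x i) \<partial>PiM I (\<lambda>_. M))
      = (\<integral>x. (\<integral>y. F (x(i:=y)) * c y \<partial>M) \<partial>PiM ?J (\<lambda>_. M))"
    unfolding I_eq by simp
  also have "\<dots> = (\<integral>y. (\<integral>x. F (x(i:=y)) * c y \<partial>PiM ?J (\<lambda>_. M)) \<partial>M)"
    using PP.Fubini_integral[OF int_pair[OF c]] by simp
  finally show "(\<integral>x. F x * c (x i) \<partial>PiM I (\<lambda>_. M)) = (\<integral>y. c y * h y \<partial>M)"
    unfolding h_def by (simp add: mult.commute)
qed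

lemma prod_unit_interval:
  fixes g :: "'b \<Rightarrow> real"
  assumes "\<And>e. e \<in> S \<Longrightarrow> 0 \<le> g e \<and> g e \<le> 1"
  shows "0 \<le> prod g S \<and> prod g S \<le> 1"
  using assms by (auto intro: prod_nonneg prod_le_1)

lemma (in prob_space) abs_integral_edge_le_cut_norm:
  fixes V :: "'a \<Rightarrow> 'a \<Rightarrow> real" and A B :: "('i \<Rightarrow> 'a) \<Rightarrow> real"
  assumes I: "finite I" "a \<in> I" "b \<in> I" "a \<noteq> b"
    and V: "(\<lambda>(s,t). V s t) \<in> borel_measurable (M \<Otimes>\<^sub>M M)" "\<And>s t. \<bar>V s t\<bar> \<le> 1"
    and A: "A \<in> borel_measurable (PiM I (\<lambda>_. M))" "\<And>x. 0 \<le> A x \<and> A x \<le> 1"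
      "\<And>x t. A (x(b:=t)) = A x"
    and B: "B \<in> borel_measurable (PiM I (\<lambda>_. M))" "\<And>x. 0 \<le> B x \<and> B x \<le> 1"
      "\<And>x s. B (x(a:=s)) = B x"
  shows "\<bar>\<integral>x. V (x a) (x b) * A x * B x \<partial>PiM I (\<lambda>_. M)\<bar> \<le> cut_norm M V"
proof -
  interpret P2: pair_prob_space M M ..
  define J where "J = I - {a, b}"
  have I_eq: "insert a (insert b J) = I" and J: "a \<notin> insert b J" "b \<notin> J" "finite (insert b J)" "finite J"
    using I unfolding J_def by auto
  interpret PJ: prob_space "PiM J (\<lambda>_. M)"
    by (intro prob_space_PiM prob_space_axioms)
  define f where "f x = V (x a) (x b) * A x * B x" for x
  have f: "f \<in> borel_measurable (PiM (insert a (insert b J)) (\<lambda>_. M))"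
    unfolding f_def I_eq using I V(1) A(1) B(1)
    by (intro borel_measurable_times borel_measurable_PiM_pair) auto
  have f_bound: "\<bar>f x\<bar> \<le> 1" for x
    unfolding f_def using V(2)[of "x a" "x b"] A(2)[of x] B(2)[of x]
    by (auto simp: abs_mult intro!: mult_le_one)
  define G where "G x = (\<integral>s. f (x(a:=s)) \<partial>M)" for x
  note G = integral_PiM_insert_bounded[OF J(3,1) f f_bound, folded G_def]
  define H where "H x = (\<integral>t. G (x(b:=t)) \<partial>M)" for x
  note H = integral_PiM_insert_bounded[OF J(4,2) G(1,2), folded H_def]
  have "\<bar>H x\<bar> \<le> cut_norm M V" if x: "x \<in> space (PiM J (\<lambda>_. M))" for x
  proof -
    obtain s0 t0 where s0: "s0 \<in> space M" and t0: "t0 \<in> space M"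
      using not_empty by blast
    have upd_ab: "(\<lambda>s. (x(b:=t))(a:=s)) \<in> measurable M (PiM I (\<lambda>_. M))" if "t \<in> space M" for t
    proof -
      have "x(b:=t) \<in> space (PiM (insert b J) (\<lambda>_. M))"
        using measurable_space[OF measurable_component_update[OF x J(2)] that] .
      from measurable_component_update[OF this J(1)] show ?thesis unfolding I_eq .
    qed
    have upd_ba: "(\<lambda>t. (x(a:=s))(b:=t)) \<in> measurable M (PiM I (\<lambda>_. M))" if "s \<in> space M" for s
    proof -
      have "a \<notin> J" "b \<notin> insert a J" "insert b (insert a J) = I"
        using I unfolding J_def by auto
      then have "x(a:=s) \<in> space (PiM (insert a J) (\<lambda>_. M))"
        using measurable_space[OF measurable_component_update[OF x] that] by blast
      from measurable_component_update[OF this \<open>b \<notin> insert a J\<close>] show ?thesis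
        unfolding \<open>insert b (insert a J) = I\<close> .
    qed
    define \<alpha> where "\<alpha> s = A ((x(b:=t0))(a:=s))" for s
    define \<beta> where "\<beta> t = B ((x(a:=s0))(b:=t))" for t
    have [measurable]: "\<alpha> \<in> borel_measurable M"
      unfolding \<alpha>_def using measurable_compose[OF upd_ab[OF t0] A(1)] by (simp add: comp_def)
    have [measurable]: "\<beta> \<in> borel_measurable M"
      unfolding \<beta>_def using measurable_compose[OF upd_ba[OF s0] B(1)] by (simp add: comp_def)
    have f_split: "f ((x(b:=t))(a:=s)) = V s t * \<alpha> s * \<beta> t" for s t
    proof -
      have "A ((x(b:=t))(a:=s)) = \<alpha> s"
        using A(3)[of "x(a:=s)" t] A(3)[of "x(a:=s)" t0] I(4) by (simp add: \<alpha>_def fun_upd_twist)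
      moreover have "B ((x(b:=t))(a:=s)) = \<beta> t"
        using B(3)[of "x(b:=t)" s] B(3)[of "x(b:=t)" s0] I(4) by (simp add: \<beta>_def fun_upd_twist)
      ultimately show ?thesis
        unfolding f_def using I(4) by simp
    qed
    have "H x = (\<integral>t. (\<integral>s. V s t * \<alpha> s * \<beta> t \<partial>M) \<partial>M)"
      unfolding H_def G_def f_split ..
    also have "\<dots> = (\<integral>z. V (fst z) (snd z) * \<alpha> (fst z) * \<beta> (snd z) \<partial>(M \<Otimes>\<^sub>M M))"
    proof -
      have \<alpha>_unit: "0 \<le> \<alpha> s \<and> \<alpha> s \<le> 1" and \<beta>_unit: "0 \<le> \<beta> s \<and> \<beta> s \<le> 1" for s
        unfolding \<alpha>_def \<beta>_def using A(2) B(2) by auto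
      have "(\<lambda>(s,t). V s t * \<alpha> s * \<beta> t) \<in> borel_measurable (M \<Otimes>\<^sub>M M)"
        using V(1) by measurable
      then have "integrable (M \<Otimes>\<^sub>M M) (\<lambda>(s,t). V s t * \<alpha> s * \<beta> t)"
        using V(2) \<alpha>_unit \<beta>_unit by (intro P2.integrable_bounded_on_space[where B=1])
          (auto simp: case_prod_beta' abs_mult intro!: mult_le_one)
      from P2.integral_snd[OF this] show ?thesis by (simp add: case_prod_beta')
    qed
    finally show ?thesis
      using abs_integral_le_cut_norm[of V \<alpha> \<beta>] V A(2) B(2) by (simp add: \<alpha>_def \<beta>_def)
  qed
  then have "\<bar>\<integral>x. H x \<partial>PiM J (\<lambda>_. M)\<bar> \<le> cut_norm M V"
    using H(1) by (rule PJ.abs_integral_le_bound[rotated])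
  then show ?thesis
    using G(3) H(3) unfolding I_eq f_def by simp
qed

lemma borel_measurable_vertex_prod:
  fixes u :: "'i \<Rightarrow> 'a \<Rightarrow> real"
  assumes "J \<subseteq> I" "\<And>j. j \<in> J \<Longrightarrow> u j \<in> borel_measurable M"
  shows "(\<lambda>x. \<Prod>j\<in>J. u j (x j)) \<in> borel_measurable (PiM I (\<lambda>_. M))"
  using assms by (intro borel_measurable_prod borel_measurable_PiM_component) auto

lemma (in prob_space) abs_integral_edge_prod_le_cut_norm:
  fixes k :: nat and V :: "'a \<Rightarrow> 'a \<Rightarrow> real" and Z :: "nat \<times> nat \<Rightarrow> 'a \<Rightarrow> 'a \<Rightarrow> real"
    and u :: "nat \<Rightarrow> 'a \<Rightarrow> real"
  assumes ab: "a < b" "b < k"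
    and D: "D \<subseteq> {(i,j). i < j \<and> j < k}" "(a,b) \<notin> D"
    and V: "(\<lambda>(s,t). V s t) \<in> borel_measurable (M \<Otimes>\<^sub>M M)" "\<And>s t. \<bar>V s t\<bar> \<le> 1"
    and Z: "\<And>e. e \<in> D \<Longrightarrow> (\<lambda>(s,t). Z e s t) \<in> borel_measurable (M \<Otimes>\<^sub>M M)"
      "\<And>e s t. e \<in> D \<Longrightarrow> 0 \<le> Z e s t \<and> Z e s t \<le> 1"
    and u: "\<And>j. j < k \<Longrightarrow> u j \<in> borel_measurable M" "\<And>j s. j < k \<Longrightarrow> 0 \<le> u j s \<and> u j s \<le> 1"
  shows "\<bar>\<integral>x. V (x a) (x b) * (\<Prod>e\<in>D. Z e (x (fst e)) (x (snd e))) * (\<Prod>j<k. u j (x j))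
           \<partial>PiM {..<k} (\<lambda>_. M)\<bar> \<le> cut_norm M V"
proof -
  define Db where "Db = {e\<in>D. fst e = b \<or> snd e = b}"
  define A where "A x = (\<Prod>e\<in>D - Db. Z e (x (fst e)) (x (snd e))) * (\<Prod>j\<in>{..<k} - {b}. u j (x j))" for x
  define B where "B x = (\<Prod>e\<in>Db. Z e (x (fst e)) (x (snd e))) * u b (x b)" for x
  have "finite D"
    using D(1) by (rule finite_subset) (auto intro: finite_subset[of _ "{..<k} \<times> {..<k}"])
  then have weight_eq: "(\<Prod>e\<in>D. Z e (x (fst e)) (x (snd e))) * (\<Prod>j<k. u j (x j)) = A x * B x" for x
    using ab(2) unfolding A_def B_def
    by (simp add: prod.subset_diff[of Db D] prod.remove[of "{..<k}" b] Db_def ac_simps)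
  have "\<bar>\<integral>x. V (x a) (x b) * A x * B x \<partial>PiM {..<k} (\<lambda>_. M)\<bar> \<le> cut_norm M V"
  proof (rule abs_integral_edge_le_cut_norm)
    show "finite {..<k}" "a \<in> {..<k}" "b \<in> {..<k}" "a \<noteq> b" using ab by auto
    show "A \<in> borel_measurable (PiM {..<k} (\<lambda>_. M))" "B \<in> borel_measurable (PiM {..<k} (\<lambda>_. M))"
      unfolding A_def B_def using D(1) Z(1) u(1) ab(2)
      by (auto intro!: borel_measurable_times borel_measurable_edge_prod[of _ k]
          borel_measurable_vertex_prod borel_measurable_PiM_component simp: Db_def)
    show "0 \<le> A x \<and> A x \<le> 1" "0 \<le> B x \<and> B x \<le> 1" for x
      unfolding A_def B_def using Z(2) u(2) ab(2)
      by (auto simp: Db_def intro!: mult_le_one mult_nonneg_nonneg prod_unit_interval[THEN conjunct1]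
          prod_unit_interval[THEN conjunct2])
    show "A (x(b:=t)) = A x" for x t
      unfolding A_def Db_def by (intro arg_cong2[where f="(*)"] prod.cong) auto
    have "fst e \<noteq> a \<and> snd e \<noteq> a" if "e \<in> Db" for e
      using that D ab(1) unfolding Db_def by (cases e) auto
    then show "B (x(a:=s)) = B x" for x s
      unfolding B_def using ab(1) by (intro arg_cong2[where f="(*)"] prod.cong) auto
  qed (use V in auto)
  then show ?thesis
    by (simp add: weight_eq mult.assoc)
qed

theorem (in prob_space) counting_lemma:
  fixes k :: nat and U W :: "'a \<Rightarrow> 'a \<Rightarrow> real" and Z :: "nat \<times> nat \<Rightarrow> 'a \<Rightarrow> 'a \<Rightarrow> real"
    and u :: "nat \<Rightarrow> 'a \<Rightarrow> real"
  assumes E: "finite E" "E \<subseteq> {(i,j). i < j \<and> j < k}"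
    and D: "D \<subseteq> {(i,j). i < j \<and> j < k}" "D \<inter> E = {}"
    and U: "(\<lambda>(s,t). U s t) \<in> borel_measurable (M \<Otimes>\<^sub>M M)" "\<And>s t. 0 \<le> U s t \<and> U s t \<le> 1"
    and W: "(\<lambda>(s,t). W s t) \<in> borel_measurable (M \<Otimes>\<^sub>M M)" "\<And>s t. 0 \<le> W s t \<and> W s t \<le> 1"
    and Z: "\<And>e. e \<in> D \<Longrightarrow> (\<lambda>(s,t). Z e s t) \<in> borel_measurable (M \<Otimes>\<^sub>M M)"
      "\<And>e s t. e \<in> D \<Longrightarrow> 0 \<le> Z e s t \<and> Z e s t \<le> 1"
    and u: "\<And>j. j < k \<Longrightarrow> u j \<in> borel_measurable M" "\<And>j s. j < k \<Longrightarrow> 0 \<le> u j s \<and> u j s \<le> 1"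
  shows "\<bar>\<integral>x. ((\<Prod>e\<in>E. U (x (fst e)) (x (snd e))) - (\<Prod>e\<in>E. W (x (fst e)) (x (snd e))))
            * (\<Prod>e\<in>D. Z e (x (fst e)) (x (snd e))) * (\<Prod>j<k. u j (x j)) \<partial>PiM {..<k} (\<lambda>_. M)\<bar>
          \<le> real (card E) * cut_norm M (\<lambda>s t. U s t - W s t)"
  using E D Z
proof (induction E arbitrary: D Z rule: finite_induct)
  case empty
  then show ?case by simp
next
  case (insert e E)
  let ?P = "PiM {..<k} (\<lambda>_. M)"
  interpret P: prob_space ?P
    by (intro prob_space_PiM prob_space_axioms)
  have e: "fst e < snd e" "snd e < k" and E_edges: "E \<subseteq> {(i,j). i < j \<and> j < k}"
    using insert.prems(1) by auto
  have eD: "e \<notin> D" and DE: "D \<inter> E = {}"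
    using insert.prems(3) by auto
  have "finite D"
    using insert.prems(2) by (rule finite_subset) (auto intro: finite_subset[of _ "{..<k} \<times> {..<k}"])
  define hU where "hU x = (\<Prod>e\<in>E. U (x (fst e)) (x (snd e)))" for x
  define hW where "hW x = (\<Prod>e\<in>E. W (x (fst e)) (x (snd e)))" for x
  define \<Phi> where "\<Phi> x = (\<Prod>e\<in>D. Z e (x (fst e)) (x (snd e)))" for x
  define w where "w x = (\<Prod>j<k. u j (x j))" for x
  define V where "V s t = U s t - W s t" for s t
  \<comment> \<open>Telescoping: \<open>U\<^sub>e hU - W\<^sub>e hW = (hU - hW) U\<^sub>e + (U\<^sub>e - W\<^sub>e) hW\<close>; the edge \<open>e\<close> moves into the
    weights of the first term, and the second term is an edge integral of \<open>V\<close>.\<close>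
  define Z' where "Z' = Z(e := U)"
  define Z'' where "Z'' = (\<lambda>e'. if e' \<in> E then W else Z e')"
  define g1 where "g1 x = (hU x - hW x) * (\<Prod>e'\<in>insert e D. Z' e' (x (fst e')) (x (snd e'))) * w x" for x
  define g2 where "g2 x = V (x (fst e)) (x (snd e)) * (\<Prod>e'\<in>E \<union> D. Z'' e' (x (fst e')) (x (snd e'))) * w x" for x
  have Z'_prod: "(\<Prod>e'\<in>insert e D. Z' e' (x (fst e')) (x (snd e'))) = U (x (fst e)) (x (snd e)) * \<Phi> x" for x
    using \<open>finite D\<close> eD unfolding \<Phi>_def Z'_def by (auto intro!: prod.cong)
  have Z''_prod: "(\<Prod>e'\<in>E \<union> D. Z'' e' (x (fst e')) (x (snd e'))) = hW x * \<Phi> x" for x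
    using insert.hyps(1) \<open>finite D\<close> DE unfolding hW_def \<Phi>_def Z''_def
    by (simp add: prod.union_disjoint Int_commute) (auto intro!: arg_cong2[where f="(*)"] prod.cong)
  have integrand_eq: "((\<Prod>e\<in>insert e E. U (x (fst e)) (x (snd e))) - (\<Prod>e\<in>insert e E. W (x (fst e)) (x (snd e))))
      * \<Phi> x * w x = g1 x + g2 x" for x
    using insert.hyps unfolding g1_def g2_def Z'_prod Z''_prod hU_def hW_def V_def
    by (simp add: algebra_simps)
  have Z': "(\<lambda>(s,t). Z' e' s t) \<in> borel_measurable (M \<Otimes>\<^sub>M M)" "0 \<le> Z' e' s t \<and> Z' e' s t \<le> 1"
    if "e' \<in> insert e D" for e' s t
    unfolding Z'_def using that U insert.prems(4)[of e'] insert.prems(5)[of e' s t] by auto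
  have Z'': "(\<lambda>(s,t). Z'' e' s t) \<in> borel_measurable (M \<Otimes>\<^sub>M M)" "0 \<le> Z'' e' s t \<and> Z'' e' s t \<le> 1"
    if "e' \<in> E \<union> D" for e' s t
    unfolding Z''_def using that W insert.prems(4)[of e'] insert.prems(5)[of e' s t] by auto
  have V: "(\<lambda>(s,t). V s t) \<in> borel_measurable (M \<Otimes>\<^sub>M M)" "\<bar>V s t\<bar> \<le> 1" for s t
    unfolding V_def using U(1) W(1) U(2)[of s t] W(2)[of s t] by (auto simp: case_prod_beta' abs_le_iff)
  have bound1: "\<bar>\<integral>x. g1 x \<partial>?P\<bar> \<le> real (card E) * cut_norm M V"
    unfolding g1_def hU_def hW_def w_def V_def
  proof (rule insert.IH)
    show "insert e D \<subseteq> {(i, j). i < j \<and> j < k}" "insert e D \<inter> E = {}"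
      using insert.prems(2) e DE insert.hyps(2) by auto
  qed (use E_edges Z' in auto)
  have bound2: "\<bar>\<integral>x. g2 x \<partial>?P\<bar> \<le> cut_norm M V"
    unfolding g2_def w_def
  proof (rule abs_integral_edge_prod_le_cut_norm[OF e])
    show "E \<union> D \<subseteq> {(i, j). i < j \<and> j < k}" "(fst e, snd e) \<notin> E \<union> D"
      using E_edges insert.prems(2) insert.hyps(2) eD by auto
  qed (use V Z'' u in auto)
  have meas: "hU \<in> borel_measurable ?P" "hW \<in> borel_measurable ?P" "w \<in> borel_measurable ?P"
    "(\<lambda>x. \<Prod>e'\<in>insert e D. Z' e' (x (fst e')) (x (snd e'))) \<in> borel_measurable ?P"
    "(\<lambda>x. \<Prod>e'\<in>E \<union> D. Z'' e' (x (fst e')) (x (snd e'))) \<in> borel_measurable ?P"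
    "(\<lambda>x. V (x (fst e)) (x (snd e))) \<in> borel_measurable ?P"
    unfolding hU_def hW_def w_def using E_edges insert.prems(2) e U W Z' Z'' u V
    by (auto intro!: borel_measurable_edge_prod borel_measurable_vertex_prod borel_measurable_PiM_pair)
  have units: "0 \<le> hU x \<and> hU x \<le> 1" "0 \<le> hW x \<and> hW x \<le> 1" "0 \<le> w x \<and> w x \<le> 1"
    "0 \<le> (\<Prod>e'\<in>insert e D. Z' e' (x (fst e')) (x (snd e'))) \<and> (\<Prod>e'\<in>insert e D. Z' e' (x (fst e')) (x (snd e'))) \<le> 1"
    "0 \<le> (\<Prod>e'\<in>E \<union> D. Z'' e' (x (fst e')) (x (snd e'))) \<and> (\<Prod>e'\<in>E \<union> D. Z'' e' (x (fst e')) (x (snd e'))) \<le> 1"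
    for x
    unfolding hU_def hW_def w_def using U W u Z' Z'' by (auto intro!: prod_unit_interval)
  have "\<bar>hU x - hW x\<bar> \<le> 1" for x
    using units(1,2)[of x] by auto
  then have "integrable ?P g1"
    unfolding g1_def using meas units(3,4)
    by (intro P.integrable_bounded_on_space[where B=1]) (auto simp: abs_mult intro!: mult_le_one)
  moreover have "integrable ?P g2"
    unfolding g2_def using meas units(3,5) V(2)
    by (intro P.integrable_bounded_on_space[where B=1]) (auto simp: abs_mult intro!: mult_le_one)
  ultimately have "(\<integral>x. ((\<Prod>e\<in>insert e E. U (x (fst e)) (x (snd e))) - (\<Prod>e\<in>insert e E. W (x (fst e)) (x (snd e))))
      * \<Phi> x * w x \<partial>?P) = (\<integral>x. g1 x \<partial>?P) + (\<integral>x. g2 x \<partial>?P)"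
    unfolding integrand_eq by (rule Bochner_Integration.integral_add)
  moreover have "V = (\<lambda>s t. U s t - W s t)"
    by (simp add: V_def fun_eq_iff)
  ultimately show ?case
    unfolding \<Phi>_def[symmetric] w_def[symmetric]
    using bound1 bound2 abs_triangle_ineq[of "\<integral>x. g1 x \<partial>?P" "\<integral>x. g2 x \<partial>?P"] insert.hyps
    by (simp add: algebra_simps)
qed

lemma (in finite_measure) weak_star_acc_point_AE_bounds:
  fixes cs :: "nat \<Rightarrow> 'a \<Rightarrow> real" and c :: "'a \<Rightarrow> real"
  assumes cs: "\<And>n. cs n \<in> borel_measurable M" "\<And>n x. x \<in> space M \<Longrightarrow> a \<le> cs n x \<and> cs n x \<le> b"
    and c: "integrable M c"
    and acc: "weak_star_acc_point M cs c"
  shows "AE x in M. a \<le> c x \<and> c x \<le> b"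
proof -
  have set_integral_bounds: "0 \<le> (\<integral>x. (c x - a) * indicator A x \<partial>M)"
    "0 \<le> (\<integral>x. (b - c x) * indicator A x \<partial>M)" if A: "A \<in> sets M" for A
  proof -
    have ind: "integrable M (indicator A :: 'a \<Rightarrow> real)"
      using A by (intro integrable_real_indicator) (auto simp: less_top[symmetric])
    have approx: "\<exists>n. \<bar>(\<integral>x. cs n x * indicator A x \<partial>M) - (\<integral>x. c x * indicator A x \<partial>M)\<bar> < e"
      if "0 < e" for e
      using acc that ind unfolding weak_star_acc_point_def
      by (auto dest!: spec[of _ "{indicator A}"] spec[of _ e])
    have int_cs: "integrable M (\<lambda>x. cs n x * indicator A x)" for n
      using cs A by (intro integrable_bounded_on_space[where B="\<bar>a\<bar> + \<bar>b\<bar>"])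
        (auto simp: indicator_def abs_le_iff dest!: cs(2)[of _ n])
    have int_ind: "(\<integral>x. indicator A x \<partial>M) = measure M A"
      using A by simp
    have "(\<integral>x. a * indicator A x \<partial>M) \<le> (\<integral>x. cs n x * indicator A x \<partial>M)"
      "(\<integral>x. cs n x * indicator A x \<partial>M) \<le> (\<integral>x. b * indicator A x \<partial>M)" for n
      using cs(2) by (intro integral_mono integrable_mult_right ind int_cs; simp add: indicator_def)+
    then have cs_bounds: "a * measure M A \<le> (\<integral>x. cs n x * indicator A x \<partial>M)"
      "(\<integral>x. cs n x * indicator A x \<partial>M) \<le> b * measure M A" for n
      using int_ind by simp_all
    have "a * measure M A \<le> (\<integral>x. c x * indicator A x \<partial>M)
        \<and> (\<integral>x. c x * indicator A x \<partial>M) \<le> b * measure M A"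
    proof (intro conjI; rule field_le_epsilon)
      fix e :: real assume "0 < e"
      then obtain n where "\<bar>(\<integral>x. cs n x * indicator A x \<partial>M) - (\<integral>x. c x * indicator A x \<partial>M)\<bar> < e"
        using approx by blast
      then show "a * measure M A \<le> (\<integral>x. c x * indicator A x \<partial>M) + e"
        "(\<integral>x. c x * indicator A x \<partial>M) \<le> b * measure M A + e"
        using cs_bounds[of n] unfolding abs_less_iff by linarith+
    qed
    moreover have "(\<integral>x. (c x - a) * indicator A x \<partial>M) = (\<integral>x. c x * indicator A x \<partial>M) - a * measure M A"
      "(\<integral>x. (b - c x) * indicator A x \<partial>M) = b * measure M A - (\<integral>x. c x * indicator A x \<partial>M)"
      using integrable_real_mult_indicator[OF A c] ind int_ind by (simp_all add: left_diff_distrib)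
    ultimately show "0 \<le> (\<integral>x. (c x - a) * indicator A x \<partial>M)" "0 \<le> (\<integral>x. (b - c x) * indicator A x \<partial>M)"
      by simp_all
  qed
  have "AE x in M. 0 \<le> c x - a" "AE x in M. 0 \<le> b - c x"
    using set_integral_bounds c
    by (intro AE_nonneg_from_generator[OF sets.semiring_of_sets_axioms sets.top sets.sigma_sets_eq[symmetric]];
        simp)+
  then show ?thesis
    by eventually_elim auto
qed

lemma weak_star_acc_point_AE_cong:
  assumes "weak_star_acc_point M cs c" and "AE x in M. c' x = c x"
    and "c \<in> borel_measurable M" "c' \<in> borel_measurable M"
  shows "weak_star_acc_point M cs c'"
proof -
  have "(\<integral>x. c' x * g x \<partial>M) = (\<integral>x. c x * g x \<partial>M)" if "integrable M g" for g
    using assms(2-4) that by (intro integral_cong_AE) auto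
  with assms(1) show ?thesis
    unfolding weak_star_acc_point_def by simp
qed

lemma hom_density_fun_eq:
  "hom_density_fun E W x = (\<Prod>e\<in>E. W (x (fst e)) (x (snd e)))"
  unfolding hom_density_fun_def by (simp add: case_prod_beta')

lemma graph_on_edges:
  "graph_on k E \<Longrightarrow> E \<subseteq> {(i,j). i < j \<and> j < k}"
  unfolding graph_on_def by auto

lemma frac_cover_iff_AE:
  fixes W :: "'a \<Rightarrow> 'a \<Rightarrow> real"
  assumes E: "graph_on k E" and W: "(\<lambda>(s,t). W s t) \<in> borel_measurable (M \<Otimes>\<^sub>M M)"
  shows "frac_cover M k E W c \<longleftrightarrow> c \<in> borel_measurable M \<and> (\<forall>x\<in>space M. 0 \<le> c x \<and> c x \<le> 1)
    \<and> (AE x in PiM {..<k} (\<lambda>_. M). hom_density_fun E W x \<noteq> 0 \<longrightarrow> 1 \<le> (\<Sum>i<k. c (x i)))"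
proof (cases "c \<in> borel_measurable M")
  case True
  let ?P = "PiM {..<k} (\<lambda>_. M)"
  have "(\<lambda>x. hom_density_fun E W x) \<in> borel_measurable ?P"
    unfolding hom_density_fun_eq using graph_on_edges[OF E] W by (rule borel_measurable_edge_prod)
  moreover have "(\<lambda>x. \<Sum>i<k. c (x i)) \<in> borel_measurable ?P"
    using True by (auto intro!: borel_measurable_sum borel_measurable_PiM_component)
  ultimately have "{x \<in> space ?P. hom_density_fun E W x \<noteq> 0 \<and> (\<Sum>i<k. c (x i)) < 1} \<in> sets ?P"
    by measurable
  then show ?thesis
    unfolding frac_cover_def using True by (subst AE_iff_measurable) (auto simp: not_le)
qed (simp add: frac_cover_def)

lemma frac_cover_vertices_pos:
  assumes "prob_space M" "graph_on k E" "frac_cover M k E W c"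
  shows "0 < k"
proof (rule ccontr)
  assume "\<not> 0 < k"
  then have "k = 0" "E = {}"
    using graph_on_edges[OF assms(2)] by auto
  then have "{x \<in> space (PiM {..<k} (\<lambda>_. M)). hom_density_fun E W x \<noteq> 0 \<and> (\<Sum>i<k. c (x i)) < 1}
      = space (PiM {..<k} (\<lambda>_. M))"
    by (auto simp: hom_density_fun_def)
  moreover have "prob_space (PiM {..<k} (\<lambda>_. M))"
    using assms(1) by (intro prob_space_PiM)
  ultimately show False
    using assms(3) unfolding frac_cover_def by (simp add: prob_space.emeasure_space_1)
qed

lemma indicator_PiE_lessThan:
  fixes k :: nat
  assumes "x \<in> extensional {..<k}"
  shows "indicator (PiE {..<k} X) x = (\<Prod>j<k. indicator (X j) (x j) :: real)"
proof (cases "\<forall>j<k. x j \<in> X j")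
  case True
  with assms show ?thesis by (simp add: PiE_iff indicator_def)
next
  case False
  then obtain j where j: "j < k" "x j \<notin> X j" by auto
  then have "x \<notin> PiE {..<k} X"
    by (auto simp: PiE_iff)
  moreover have "(\<Prod>j<k. indicator (X j) (x j) :: real) = 0"
    using j by (intro prod_zero) (auto simp: indicator_def)
  ultimately show ?thesis by simp
qed

lemma (in prob_space) AE_nonneg_PiM_from_boxes:
  fixes k :: nat and f :: "(nat \<Rightarrow> 'a) \<Rightarrow> real"
  assumes k: "0 < k" and f: "integrable (PiM {..<k} (\<lambda>_. M)) f"
    and boxes: "\<And>X. (\<And>j. j < k \<Longrightarrow> X j \<in> sets M) \<Longrightarrow>
      0 \<le> (\<integral>x. f x * (\<Prod>j<k. indicator (X j) (x j)) \<partial>PiM {..<k} (\<lambda>_. M))"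
  shows "AE x in PiM {..<k} (\<lambda>_. M). 0 \<le> f x"
proof (rule AE_nonneg_from_generator[OF semiring_of_sets_PiE[OF k]])
  show "PiE {..<k} (\<lambda>_. space M) \<in> {PiE {..<k} X | X. X \<in> (\<Pi> j\<in>{..<k}. sets M)}"
    by blast
  show "sets (PiM {..<k} (\<lambda>_. M)) = sigma_sets (PiE {..<k} (\<lambda>_. space M)) {PiE {..<k} X | X. X \<in> (\<Pi> j\<in>{..<k}. sets M)}"
    unfolding sets_PiM by (simp add: prod_algebra_eq_finite)
  fix R assume "R \<in> {PiE {..<k} X | X. X \<in> (\<Pi> j\<in>{..<k}. sets M)}"
  then obtain X where X: "X \<in> (\<Pi> j\<in>{..<k}. sets M)" "R = PiE {..<k} X" by blast
  have "indicator R x = (\<Prod>j<k. indicator (X j) (x j) :: real)" if "x \<in> space (PiM {..<k} (\<lambda>_. M))" for x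
    using that unfolding X(2) by (intro indicator_PiE_lessThan) (simp add: space_PiM PiE_iff)
  then have "(\<integral>x. f x * indicator R x \<partial>PiM {..<k} (\<lambda>_. M))
      = (\<integral>x. f x * (\<Prod>j<k. indicator (X j) (x j)) \<partial>PiM {..<k} (\<lambda>_. M))"
    by (intro Bochner_Integration.integral_cong) auto
  also have "\<dots> \<ge> 0"
    using X(1) by (intro boxes) auto
  finally show "0 \<le> (\<integral>x. f x * indicator R x \<partial>PiM {..<k} (\<lambda>_. M))" .
qed (rule f)

lemma (in prob_space) abs_integral_hom_diff_weighted_le:
  fixes k :: nat and U W :: "'a \<Rightarrow> 'a \<Rightarrow> real" and u :: "nat \<Rightarrow> 'a \<Rightarrow> real"
  assumes E: "E \<subseteq> {(i,j). i < j \<and> j < k}"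
    and U: "(\<lambda>(s,t). U s t) \<in> borel_measurable (M \<Otimes>\<^sub>M M)" "\<And>s t. 0 \<le> U s t \<and> U s t \<le> 1"
    and W: "(\<lambda>(s,t). W s t) \<in> borel_measurable (M \<Otimes>\<^sub>M M)" "\<And>s t. 0 \<le> W s t \<and> W s t \<le> 1"
    and u: "\<And>j. j < k \<Longrightarrow> u j \<in> borel_measurable M" "\<And>j s. j < k \<Longrightarrow> 0 \<le> u j s \<and> u j s \<le> 1"
  shows "\<bar>(\<integral>x. (\<Prod>e\<in>E. U (x (fst e)) (x (snd e))) * (\<Prod>j<k. u j (x j)) \<partial>PiM {..<k} (\<lambda>_. M))
          - (\<integral>x. (\<Prod>e\<in>E. W (x (fst e)) (x (snd e))) * (\<Prod>j<k. u j (x j)) \<partial>PiM {..<k} (\<lambda>_. M))\<bar>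
         \<le> real (card E) * cut_norm M (\<lambda>s t. U s t - W s t)"
proof -
  interpret P: prob_space "PiM {..<k} (\<lambda>_. M)"
    by (intro prob_space_PiM prob_space_axioms)
  have "finite E"
    using E by (rule finite_subset) (auto intro: finite_subset[of _ "{..<k} \<times> {..<k}"])
  have int: "integrable (PiM {..<k} (\<lambda>_. M)) (\<lambda>x. (\<Prod>e\<in>E. V (x (fst e)) (x (snd e))) * (\<Prod>j<k. u j (x j)))"
    if "(\<lambda>(s,t). V s t) \<in> borel_measurable (M \<Otimes>\<^sub>M M)" "\<And>s t. 0 \<le> V s t \<and> V s t \<le> 1"
    for V :: "'a \<Rightarrow> 'a \<Rightarrow> real"
  proof -
    have "0 \<le> (\<Prod>e\<in>E. V (x (fst e)) (x (snd e))) \<and> (\<Prod>e\<in>E. V (x (fst e)) (x (snd e))) \<le> 1"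
      "0 \<le> (\<Prod>j<k. u j (x j)) \<and> (\<Prod>j<k. u j (x j)) \<le> 1" for x
      using that(2) u(2) by (auto intro!: prod_unit_interval)
    then show ?thesis
      using E that(1) u(1)
      by (intro P.integrable_bounded_on_space[where B=1] borel_measurable_times borel_measurable_edge_prod
          borel_measurable_vertex_prod) (auto simp: abs_mult intro!: mult_le_one)
  qed
  have "\<bar>\<integral>x. ((\<Prod>e\<in>E. U (x (fst e)) (x (snd e))) - (\<Prod>e\<in>E. W (x (fst e)) (x (snd e))))
      * (\<Prod>e\<in>{}. (\<lambda>_ _ _. 0) e (x (fst e)) (x (snd e))) * (\<Prod>j<k. u j (x j)) \<partial>PiM {..<k} (\<lambda>_. M)\<bar>
      \<le> real (card E) * cut_norm M (\<lambda>s t. U s t - W s t)"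
    by (rule counting_lemma[OF \<open>finite E\<close> E _ _ U W _ _ u]) auto
  then show ?thesis
    using Bochner_Integration.integral_diff[OF int[OF U] int[OF W]] by (simp add: left_diff_distrib)
qed

lemma (in prob_space) integral_PiM_sum_components_minus_one:
  fixes k :: nat and g :: "(nat \<Rightarrow> 'a) \<Rightarrow> real" and d :: "'a \<Rightarrow> real"
  assumes g: "g \<in> borel_measurable (PiM {..<k} (\<lambda>_. M))" "\<And>x. \<bar>g x\<bar> \<le> 1"
    and d: "d \<in> borel_measurable M" "\<And>s. \<bar>d s\<bar> \<le> 1"
  shows "(\<integral>x. g x * ((\<Sum>i<k. d (x i)) - 1) \<partial>PiM {..<k} (\<lambda>_. M))
       = (\<Sum>i<k. \<integral>x. g x * d (x i) \<partial>PiM {..<k} (\<lambda>_. M)) - (\<integral>x. g x \<partial>PiM {..<k} (\<lambda>_. M))"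
proof -
  interpret P: prob_space "PiM {..<k} (\<lambda>_. M)"
    by (intro prob_space_PiM prob_space_axioms)
  have int_g: "integrable (PiM {..<k} (\<lambda>_. M)) g"
    using g by (intro P.integrable_bounded_on_space[where B=1])
  have int_gd: "integrable (PiM {..<k} (\<lambda>_. M)) (\<lambda>x. g x * d (x i))" if "i < k" for i
    using g d that by (intro P.integrable_bounded_on_space[where B=1] borel_measurable_times
        borel_measurable_PiM_component) (auto simp: abs_mult intro: mult_le_one)
  have "(\<integral>x. g x * ((\<Sum>i<k. d (x i)) - 1) \<partial>PiM {..<k} (\<lambda>_. M))
      = (\<integral>x. (\<Sum>i<k. g x * d (x i)) - g x \<partial>PiM {..<k} (\<lambda>_. M))"
    by (simp add: right_diff_distrib sum_distrib_left)
  also have "\<dots> = (\<integral>x. (\<Sum>i<k. g x * d (x i)) \<partial>PiM {..<k} (\<lambda>_. M)) - (\<integral>x. g x \<partial>PiM {..<k} (\<lambda>_. M))"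
    using int_gd int_g by (intro Bochner_Integration.integral_diff integrable_sum) auto
  also have "(\<integral>x. (\<Sum>i<k. g x * d (x i)) \<partial>PiM {..<k} (\<lambda>_. M)) = (\<Sum>i<k. \<integral>x. g x * d (x i) \<partial>PiM {..<k} (\<lambda>_. M))"
    using int_gd by (intro Bochner_Integration.integral_sum) auto
  finally show ?thesis .
qed

lemma (in prob_space) integral_box_cover_excess_lower_bound:
  fixes k :: nat and U W :: "'a \<Rightarrow> 'a \<Rightarrow> real" and d c :: "'a \<Rightarrow> real" and X :: "nat \<Rightarrow> 'a set"
  assumes E: "E \<subseteq> {(i,j). i < j \<and> j < k}"
    and U: "(\<lambda>(s,t). U s t) \<in> borel_measurable (M \<Otimes>\<^sub>M M)" "\<And>s t. 0 \<le> U s t \<and> U s t \<le> 1"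
    and W: "(\<lambda>(s,t). W s t) \<in> borel_measurable (M \<Otimes>\<^sub>M M)" "\<And>s t. 0 \<le> W s t \<and> W s t \<le> 1"
    and d: "d \<in> borel_measurable M" "\<And>s. 0 \<le> d s \<and> d s \<le> 1"
    and cover: "AE x in PiM {..<k} (\<lambda>_. M).
      (\<Prod>e\<in>E. U (x (fst e)) (x (snd e))) \<noteq> 0 \<longrightarrow> 1 \<le> (\<Sum>i<k. d (x i))"
    and c: "c \<in> borel_measurable M" "\<And>s. 0 \<le> c s \<and> c s \<le> 1"
    and X: "\<And>j. j < k \<Longrightarrow> X j \<in> sets M"
  defines "h i y \<equiv> \<integral>x. (\<Prod>e\<in>E. W ((x(i:=y)) (fst e)) ((x(i:=y)) (snd e)))
      * (\<Prod>j<k. indicator (X j) ((x(i:=y)) j)) \<partial>PiM ({..<k} - {i}) (\<lambda>_. M)"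
  shows "\<And>i. i < k \<Longrightarrow> integrable M (h i)"
    and "- (\<Sum>i<k. \<bar>(\<integral>y. d y * h i y \<partial>M) - (\<integral>y. c y * h i y \<partial>M)\<bar>)
           - (real k + 1) * real (card E) * cut_norm M (\<lambda>s t. U s t - W s t)
         \<le> (\<integral>x. (\<Prod>e\<in>E. W (x (fst e)) (x (snd e))) * ((\<Sum>i<k. c (x i)) - 1)
              * (\<Prod>j<k. indicator (X j) (x j)) \<partial>PiM {..<k} (\<lambda>_. M))"
proof -
  let ?P = "PiM {..<k} (\<lambda>_. M)"
  define hU where "hU x = (\<Prod>e\<in>E. U (x (fst e)) (x (snd e)))" for x
  define hW where "hW x = (\<Prod>e\<in>E. W (x (fst e)) (x (snd e)))" for x
  define w where "w x = (\<Prod>j<k. indicator (X j) (x j) :: real)" for x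
  define \<delta> where "\<delta> = cut_norm M (\<lambda>s t. U s t - W s t)"
  have meas: "hU \<in> borel_measurable ?P" "hW \<in> borel_measurable ?P" "w \<in> borel_measurable ?P"
    unfolding hU_def hW_def w_def using E U(1) W(1) X
    by (auto intro!: borel_measurable_edge_prod borel_measurable_vertex_prod)
  have unit: "0 \<le> hU x \<and> hU x \<le> 1" "0 \<le> hW x \<and> hW x \<le> 1" "0 \<le> w x \<and> w x \<le> 1" for x
    unfolding hU_def hW_def w_def using U(2) W(2) by (auto intro!: prod_unit_interval)
  have unit_mult: "\<bar>hU x * w x\<bar> \<le> 1" "\<bar>hW x * w x\<bar> \<le> 1" for x
    using unit[of x] by (auto simp: abs_mult intro: mult_le_one)
  have unit_abs: "\<bar>f s\<bar> \<le> 1" if "\<And>s. 0 \<le> f s \<and> f s \<le> 1" for f :: "'a \<Rightarrow> real" and s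
    using that[of s] by auto
  have marginal: "integrable M (h i)" "(\<integral>x. hW x * w x * f (x i) \<partial>?P) = (\<integral>y. f y * h i y \<partial>M)"
    if "i < k" "f \<in> borel_measurable M" "\<And>s. 0 \<le> f s \<and> f s \<le> 1" for i f
    using integral_PiM_component_factor[where I="{..<k}" and i=i and F="\<lambda>x. hW x * w x" and c=f]
      meas unit_mult that unit_abs
    unfolding h_def hW_def w_def by auto
  then show "\<And>i. i < k \<Longrightarrow> integrable M (h i)"
    using c by blast
  have close: "(\<integral>x. hU x * w x * f (x i) \<partial>?P) \<le> (\<integral>x. hW x * w x * f (x i) \<partial>?P) + real (card E) * \<delta>"
    if "i < k" "f \<in> borel_measurable M" "\<And>s. 0 \<le> f s \<and> f s \<le> 1" for i f
  proof -
    have "(\<Prod>j<k. indicator (X j) (x j) * (if j = i then f (x j) else 1)) = w x * f (x i)" for x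
      using that(1) unfolding w_def by (simp add: prod.distrib prod.delta)
    moreover have "\<bar>(\<integral>x. hU x * (\<Prod>j<k. indicator (X j) (x j) * (if j = i then f (x j) else 1)) \<partial>?P)
        - (\<integral>x. hW x * (\<Prod>j<k. indicator (X j) (x j) * (if j = i then f (x j) else 1)) \<partial>?P)\<bar>
        \<le> real (card E) * \<delta>"
      unfolding hU_def hW_def \<delta>_def using E U W X that(2,3)
      by (intro abs_integral_hom_diff_weighted_le) (auto simp: indicator_def)
    ultimately show ?thesis by (simp add: mult.assoc abs_le_iff)
  qed
  have close_1: "(\<integral>x. hW x * w x \<partial>?P) \<le> (\<integral>x. hU x * w x \<partial>?P) + real (card E) * \<delta>"
  proof -
    have "\<bar>(\<integral>x. hU x * w x \<partial>?P) - (\<integral>x. hW x * w x \<partial>?P)\<bar> \<le> real (card E) * \<delta>"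
      unfolding hU_def hW_def w_def \<delta>_def using E U W X
      by (intro abs_integral_hom_diff_weighted_le) (auto simp: indicator_def)
    then show ?thesis by (simp add: abs_le_iff)
  qed
  have expand: "(\<integral>x. g x * w x * ((\<Sum>i<k. f (x i)) - 1) \<partial>?P)
      = (\<Sum>i<k. \<integral>x. g x * w x * f (x i) \<partial>?P) - (\<integral>x. g x * w x \<partial>?P)"
    if "g \<in> borel_measurable ?P" "\<And>x. \<bar>g x * w x\<bar> \<le> 1" "f \<in> borel_measurable M" "\<And>s. 0 \<le> f s \<and> f s \<le> 1"
    for g f
    using that meas unit_abs by (intro integral_PiM_sum_components_minus_one) auto
  have "AE x in ?P. 0 \<le> hU x * w x * ((\<Sum>i<k. d (x i)) - 1)"
    using cover by eventually_elim (use unit in \<open>force simp: hU_def\<close>)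
  then have "0 \<le> (\<integral>x. hU x * w x * ((\<Sum>i<k. d (x i)) - 1) \<partial>?P)"
    by (rule integral_nonneg_AE)
  also have "\<dots> \<le> (\<Sum>i<k. (\<integral>y. d y * h i y \<partial>M) + real (card E) * \<delta>) - (\<integral>x. hW x * w x \<partial>?P) + real (card E) * \<delta>"
    unfolding expand[OF meas(1) unit_mult(1) d] using close[OF _ d] marginal(2)[OF _ d] close_1
    by (smt (verit) lessThan_iff sum_mono)
  also have "\<dots> = (\<Sum>i<k. \<integral>y. d y * h i y \<partial>M) + real k * (real (card E) * \<delta>)
      - (\<integral>x. hW x * w x \<partial>?P) + real (card E) * \<delta>"
    by (simp add: sum.distrib)
  also have "\<dots> \<le> (\<Sum>i<k. \<integral>y. c y * h i y \<partial>M) + (\<Sum>i<k. \<bar>(\<integral>y. d y * h i y \<partial>M) - (\<integral>y. c y * h i y \<partial>M)\<bar>)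
      + real k * (real (card E) * \<delta>) - (\<integral>x. hW x * w x \<partial>?P) + real (card E) * \<delta>"
    unfolding sum.distrib[symmetric] by (simp add: sum_mono abs_if)
  finally have "0 \<le> (\<Sum>i<k. \<integral>y. c y * h i y \<partial>M) + (\<Sum>i<k. \<bar>(\<integral>y. d y * h i y \<partial>M) - (\<integral>y. c y * h i y \<partial>M)\<bar>)
      + real k * (real (card E) * \<delta>) - (\<integral>x. hW x * w x \<partial>?P) + real (card E) * \<delta>" .
  moreover have "(\<Sum>i<k. \<integral>y. c y * h i y \<partial>M) - (\<integral>x. hW x * w x \<partial>?P)
      = (\<integral>x. hW x * w x * ((\<Sum>i<k. c (x i)) - 1) \<partial>?P)"
    using expand[OF meas(2) unit_mult(2) c] marginal(2)[OF _ c] by simp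
  moreover have "(\<integral>x. hW x * w x * ((\<Sum>i<k. c (x i)) - 1) \<partial>?P)
      = (\<integral>x. (\<Prod>e\<in>E. W (x (fst e)) (x (snd e))) * ((\<Sum>i<k. c (x i)) - 1)
              * (\<Prod>j<k. indicator (X j) (x j)) \<partial>?P)"
    unfolding hW_def w_def by (simp only: mult_ac)
  moreover have "(real k + 1) * real (card E) * \<delta> = real k * (real (card E) * \<delta>) + real (card E) * \<delta>"
    by (simp add: algebra_simps)
  ultimately show "- (\<Sum>i<k. \<bar>(\<integral>y. d y * h i y \<partial>M) - (\<integral>y. c y * h i y \<partial>M)\<bar>)
           - (real k + 1) * real (card E) * cut_norm M (\<lambda>s t. U s t - W s t)
         \<le> (\<integral>x. (\<Prod>e\<in>E. W (x (fst e)) (x (snd e))) * ((\<Sum>i<k. c (x i)) - 1)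
              * (\<Prod>j<k. indicator (X j) (x j)) \<partial>PiM {..<k} (\<lambda>_. M))"
    unfolding \<delta>_def by linarith
qed

lemma (in prob_space) integral_box_cover_excess_nonneg:
  fixes k :: nat and Ws :: "nat \<Rightarrow> 'a \<Rightarrow> 'a \<Rightarrow> real" and W :: "'a \<Rightarrow> 'a \<Rightarrow> real"
    and cs :: "nat \<Rightarrow> 'a \<Rightarrow> real" and c :: "'a \<Rightarrow> real" and X :: "nat \<Rightarrow> 'a set"
  assumes E: "E \<subseteq> {(i,j). i < j \<and> j < k}"
    and Ws: "\<And>n. (\<lambda>(s,t). Ws n s t) \<in> borel_measurable (M \<Otimes>\<^sub>M M)" "\<And>n s t. 0 \<le> Ws n s t \<and> Ws n s t \<le> 1"
    and W: "(\<lambda>(s,t). W s t) \<in> borel_measurable (M \<Otimes>\<^sub>M M)" "\<And>s t. 0 \<le> W s t \<and> W s t \<le> 1"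
    and conv: "(\<lambda>n. cut_norm M (\<lambda>s t. Ws n s t - W s t)) \<longlonglongrightarrow> 0"
    and cs: "\<And>n. cs n \<in> borel_measurable M" "\<And>n s. 0 \<le> cs n s \<and> cs n s \<le> 1"
    and cover: "\<And>n. AE x in PiM {..<k} (\<lambda>_. M).
      (\<Prod>e\<in>E. Ws n (x (fst e)) (x (snd e))) \<noteq> 0 \<longrightarrow> 1 \<le> (\<Sum>i<k. cs n (x i))"
    and c: "c \<in> borel_measurable M" "\<And>s. 0 \<le> c s \<and> c s \<le> 1"
    and acc: "weak_star_acc_point M cs c"
    and X: "\<And>j. j < k \<Longrightarrow> X j \<in> sets M"
  shows "0 \<le> (\<integral>x. (\<Prod>e\<in>E. W (x (fst e)) (x (snd e))) * ((\<Sum>i<k. c (x i)) - 1)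
              * (\<Prod>j<k. indicator (X j) (x j)) \<partial>PiM {..<k} (\<lambda>_. M))" (is "0 \<le> ?I")
proof (rule field_le_epsilon)
  fix e :: real assume "0 < e"
  define h where "h i y = (\<integral>x. (\<Prod>e\<in>E. W ((x(i:=y)) (fst e)) ((x(i:=y)) (snd e)))
      * (\<Prod>j<k. indicator (X j) ((x(i:=y)) j)) \<partial>PiM ({..<k} - {i}) (\<lambda>_. M))" for i y
  define \<epsilon> where "\<epsilon> = e / (2 * (real k + 1))"
  have h_int: "integrable M (h i)" if "i < k" for i
    unfolding h_def by (rule integral_box_cover_excess_lower_bound(1)[OF E Ws(1)[of 0] Ws(2)[of 0] W
        cs(1)[of 0] cs(2)[of 0] cover[of 0] c X that])
  have bound: "- (\<Sum>i<k. \<bar>(\<integral>y. cs n y * h i y \<partial>M) - (\<integral>y. c y * h i y \<partial>M)\<bar>)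
      - (real k + 1) * real (card E) * cut_norm M (\<lambda>s t. Ws n s t - W s t) \<le> ?I" for n
    unfolding h_def by (rule integral_box_cover_excess_lower_bound(2)[OF E Ws(1)[of n] Ws(2)[of n] W
        cs(1)[of n] cs(2)[of n] cover[of n] c X])
  have "(\<lambda>n. (real k + 1) * real (card E) * cut_norm M (\<lambda>s t. Ws n s t - W s t)) \<longlonglongrightarrow> 0"
    using conv by (intro tendsto_mult_right_zero)
  then obtain N where N: "\<And>n. N \<le> n \<Longrightarrow> (real k + 1) * real (card E) * cut_norm M (\<lambda>s t. Ws n s t - W s t) < e / 2"
    using order_tendstoD(2)[of _ 0 sequentially "e / 2"] \<open>0 < e\<close> by (auto simp: eventually_sequentially)
  have "finite (h ` {..<k})" "\<forall>g\<in>h ` {..<k}. integrable M g" "0 < \<epsilon>"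
    using h_int \<open>0 < e\<close> unfolding \<epsilon>_def by auto
  then obtain n where "N \<le> n"
    and n: "\<And>i. i < k \<Longrightarrow> \<bar>(\<integral>y. cs n y * h i y \<partial>M) - (\<integral>y. c y * h i y \<partial>M)\<bar> < \<epsilon>"
    using acc[unfolded weak_star_acc_point_def, rule_format, of "h ` {..<k}" \<epsilon> N] by auto
  have "(\<Sum>i<k. \<bar>(\<integral>y. cs n y * h i y \<partial>M) - (\<integral>y. c y * h i y \<partial>M)\<bar>) \<le> (\<Sum>i<k. \<epsilon>)"
    using n by (intro sum_mono) (auto intro: less_imp_le)
  also have "\<dots> \<le> e / 2"
    using \<open>0 < e\<close> unfolding \<epsilon>_def by (simp add: field_simps)
  finally show "0 \<le> ?I + e"
    using bound[of n] N[OF \<open>N \<le> n\<close>] by linarith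
qed

lemma (in prob_space) frac_cover_from_boxes:
  fixes k :: nat and W :: "'a \<Rightarrow> 'a \<Rightarrow> real" and c :: "'a \<Rightarrow> real"
  assumes E: "graph_on k E" and k: "0 < k"
    and W: "(\<lambda>(s,t). W s t) \<in> borel_measurable (M \<Otimes>\<^sub>M M)" "\<And>s t. 0 \<le> W s t \<and> W s t \<le> 1"
    and c: "c \<in> borel_measurable M" "\<And>s. 0 \<le> c s \<and> c s \<le> 1"
    and boxes: "\<And>X. (\<And>j. j < k \<Longrightarrow> X j \<in> sets M) \<Longrightarrow>
      0 \<le> (\<integral>x. (\<Prod>e\<in>E. W (x (fst e)) (x (snd e))) * ((\<Sum>i<k. c (x i)) - 1)
              * (\<Prod>j<k. indicator (X j) (x j)) \<partial>PiM {..<k} (\<lambda>_. M))"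
  shows "frac_cover M k E W c"
proof -
  let ?P = "PiM {..<k} (\<lambda>_. M)"
  interpret P: prob_space ?P
    by (intro prob_space_PiM prob_space_axioms)
  define f where "f x = (\<Prod>e\<in>E. W (x (fst e)) (x (snd e))) * ((\<Sum>i<k. c (x i)) - 1)" for x
  have hom_unit: "0 \<le> hom_density_fun E W x \<and> hom_density_fun E W x \<le> 1" for x
    unfolding hom_density_fun_eq using W(2) by (intro prod_unit_interval)
  have "\<bar>f x\<bar> \<le> real k + 1" for x
  proof -
    have "0 \<le> (\<Sum>i<k. c (x i))"
      using c(2) by (auto intro: sum_nonneg)
    moreover have "(\<Sum>i<k. c (x i)) \<le> (\<Sum>i<k. 1)"
      using c(2) by (intro sum_mono) auto
    ultimately have "\<bar>(\<Sum>i<k. c (x i)) - 1\<bar> \<le> real k + 1"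
      by auto
    moreover have "\<bar>f x\<bar> \<le> \<bar>(\<Sum>i<k. c (x i)) - 1\<bar>"
      using hom_unit[of x] unfolding f_def hom_density_fun_eq by (auto simp: abs_mult intro: mult_left_le_one_le)
    ultimately show ?thesis by linarith
  qed
  moreover have "f \<in> borel_measurable ?P"
    unfolding f_def using graph_on_edges[OF E] W(1) c(1)
    by (intro borel_measurable_times borel_measurable_diff borel_measurable_edge_prod borel_measurable_sum
        borel_measurable_PiM_component borel_measurable_const) auto
  ultimately have "AE x in ?P. 0 \<le> f x"
    using boxes unfolding f_def
    by (intro AE_nonneg_PiM_from_boxes[OF k] P.integrable_bounded_on_space[where B="real k + 1"]) auto
  then have "AE x in ?P. hom_density_fun E W x \<noteq> 0 \<longrightarrow> 1 \<le> (\<Sum>i<k. c (x i))"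
  proof eventually_elim
    case (elim x)
    then show ?case
      using hom_unit[of x] unfolding f_def hom_density_fun_eq[symmetric] by (auto simp: zero_le_mult_iff)
  qed
  then show ?thesis
    using frac_cover_iff_AE[OF E W(1)] c by auto
qed

lemma (in prob_space) frac_cover_of_weak_star_acc_point:
  fixes k :: nat and Ws :: "nat \<Rightarrow> 'a \<Rightarrow> 'a \<Rightarrow> real" and W :: "'a \<Rightarrow> 'a \<Rightarrow> real"
    and cs :: "nat \<Rightarrow> 'a \<Rightarrow> real" and c :: "'a \<Rightarrow> real"
  assumes E: "graph_on k E" and k: "0 < k"
    and Ws: "\<And>n. (\<lambda>(s,t). Ws n s t) \<in> borel_measurable (M \<Otimes>\<^sub>M M)" "\<And>n s t. 0 \<le> Ws n s t \<and> Ws n s t \<le> 1"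
    and W: "(\<lambda>(s,t). W s t) \<in> borel_measurable (M \<Otimes>\<^sub>M M)" "\<And>s t. 0 \<le> W s t \<and> W s t \<le> 1"
    and conv: "(\<lambda>n. cut_norm M (\<lambda>s t. Ws n s t - W s t)) \<longlonglongrightarrow> 0"
    and cs: "\<And>n. cs n \<in> borel_measurable M" "\<And>n s. 0 \<le> cs n s \<and> cs n s \<le> 1"
      "\<And>n. AE x in PiM {..<k} (\<lambda>_. M). hom_density_fun E (Ws n) x \<noteq> 0 \<longrightarrow> 1 \<le> (\<Sum>i<k. cs n (x i))"
    and c: "c \<in> borel_measurable M" "\<And>s. 0 \<le> c s \<and> c s \<le> 1"
    and acc: "weak_star_acc_point M cs c"
  shows "frac_cover M k E W c"
  using E k W c
proof (rule frac_cover_from_boxes)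
  show "0 \<le> (\<integral>x. (\<Prod>e\<in>E. W (x (fst e)) (x (snd e))) * ((\<Sum>i<k. c (x i)) - 1)
      * (\<Prod>j<k. indicator (X j) (x j)) \<partial>PiM {..<k} (\<lambda>_. M))"
    if "\<And>j. j < k \<Longrightarrow> X j \<in> sets M" for X
    using graph_on_edges[OF E] Ws W conv cs c acc that
    by (intro integral_box_cover_excess_nonneg) (auto simp: hom_density_fun_eq)
qed

theorem theorem3p14:
  fixes M :: "'a::polish_space measure"
    and k :: nat and E :: "(nat \<times> nat) set"
    and Ws :: "nat \<Rightarrow> 'a \<Rightarrow> 'a \<Rightarrow> real" and W :: "'a \<Rightarrow> 'a \<Rightarrow> real"
    and cs :: "nat \<Rightarrow> 'a \<Rightarrow> real" and c :: "'a \<Rightarrow> real"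
  assumes "prob_space M" and "sets M = sets borel" and "atomless M"
    and "graph_on k E"
    and "\<And>n. graphon M (Ws n)" and "graphon M W"
    and "(\<lambda>n. cut_norm M (\<lambda>x y. Ws n x y - W x y)) \<longlonglongrightarrow> 0"
    and "\<And>n. frac_cover M k E (Ws n) (cs n)"
    and "c \<in> borel_measurable M" and "\<exists>B. AE x in M. \<bar>c x\<bar> \<le> B"
    and "weak_star_acc_point M cs c"
  shows "\<exists>c'. (AE x in M. c' x = c x) \<and> frac_cover M k E W c'"
proof -
  interpret prob_space M by fact
  have "space M = UNIV"
    using sets_eq_imp_space_eq[OF assms(2)] by simp
  then have Ws: "(\<lambda>(s,t). Ws n s t) \<in> borel_measurable (M \<Otimes>\<^sub>M M)" "0 \<le> Ws n s t \<and> Ws n s t \<le> 1"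
    and W: "(\<lambda>(s,t). W s t) \<in> borel_measurable (M \<Otimes>\<^sub>M M)" "0 \<le> W s t \<and> W s t \<le> 1" for n s t
    using assms(5)[of n] assms(6) unfolding graphon_def by auto
  have cs: "cs n \<in> borel_measurable M" "0 \<le> cs n s \<and> cs n s \<le> 1"
    "AE x in PiM {..<k} (\<lambda>_. M). hom_density_fun E (Ws n) x \<noteq> 0 \<longrightarrow> 1 \<le> (\<Sum>i<k. cs n (x i))" for n s
    using assms(8)[of n] \<open>space M = UNIV\<close> unfolding frac_cover_iff_AE[OF assms(4) Ws(1)] by auto
  obtain B where "AE x in M. \<bar>c x\<bar> \<le> B"
    using assms(10) ..
  then have "integrable M c"
    using assms(9) by (intro integrable_const_bound[where B=B]) auto
  then have "AE x in M. 0 \<le> c x \<and> c x \<le> 1"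
    using cs(1,2) assms(11) by (intro weak_star_acc_point_AE_bounds) auto
  moreover define c' where "c' x = max 0 (min 1 (c x))" for x
  ultimately have c'_AE: "AE x in M. c' x = c x"
    by (auto elim: AE_mp)
  have c'_meas: "c' \<in> borel_measurable M"
    unfolding c'_def using assms(9) by measurable
  have "frac_cover M k E W c'"
  proof (rule frac_cover_of_weak_star_acc_point[OF assms(4) _ Ws W assms(7) cs c'_meas])
    show "0 < k"
      using frac_cover_vertices_pos[OF assms(1,4,8)] .
    show "0 \<le> c' s \<and> c' s \<le> 1" for s
      unfolding c'_def by auto
    show "weak_star_acc_point M cs c'"
      using assms(11) c'_AE assms(9) c'_meas by (rule weak_star_acc_point_AE_cong)
  qed
  with c'_AE show ?thesis
    by blast
qed

end
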